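(* The following queries are traversal-invariant definable over the indicated families: (1) undirected $st$-connectivity, i.e. the class of finite 2-pointed graphs $(G,s,t)$ in which $s$ and $t$ lie in the same connected component, over the family of all finite 2-pointed graphs; (2) the class of all acyclic graphs, over the family of all finite graphs; (3) the class of all bipartite graphs, over the family of all finite graphs; (4) the class of finite linear orders of even size, over the family of all finite linear orders.
   Context: Graphs are finite and undirected. A linear order $<$ of the vertex set of a graph, listing vertices $v_1<\dots<v_n$, is a traversal if for each $i\ge2$: whenever some vertex among $v_1,\dots,v_{i-1}$ has a neighbour outside $\{v_1,\dots,v_{i-1}\}$, $v_i$ has a neighbour among $v_1,\dots,v_{i-1}$ (a visiting order of generic graph search). Equivalently: for all $u<v<w$, $uEw$ implies some $x<v$ has $xEv$. $\Gamma_n$ is the signature with a binary relation symbol $E$ and $n$ constants; an $n$-pointed graph is a graph with $n$ distinguished vertices. A query over a family of structures is an isomorphism-closed subfamily. A $k$-ary interpretation $\pi:\Gamma_n\to K$ consists of a first-order $K$-formula $\partial^\pi(\bar x)$ in a $k$-tuple of variables, a $K$-formula $E^\pi(\bar x,\bar y)$, and for each constant a definition by cases (cases $K$-formulas, values $k$-tuples of $K$-terms). For a $K$-structure $A$, $A^\pi$ is the $\Gamma_n$-structure with domain $\{\bar a\in A^k:A\models\partial^\pi(\bar a)\}$ and symbols interpreted by their translations. $\pi$ is left total from $\mathcal K$ to $\mathcal G'$ if $A^\pi\in\mathcal G'$ for all $A\in\mathcal K$. For a family $\mathcal G'$ of finite $n$-pointed graphs let $\mathcal T$ be the family of expansions $(G,<)$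 with $G\in\mathcal G'$ and $<$ a traversal of $G$. A first-order $\Gamma_n\cup\{<\}$-sentence $\varphi$ is $(\mathcal G',\mathcal T)$-invariant if $(G,<)\models\varphi\iff(H,<')\models\varphi$ whenever $(G,<),(H,<')\in\mathcal T$ and $G\cong H$; then $G\models(\mathfrak T<)\varphi$ means $(G,<)\models\varphi$ for some (equivalently every) traversal $<$. A query $Q$ over a family $\mathcal K$ of $K$-structures is basic traversal-invariant definable if there are $n$, a family $\mathcal G'$ of finite $n$-pointed graphs, a $(\mathcal G',\mathcal T)$-invariant sentence $\varphi$, and an interpretation $\pi:\Gamma_n\to K$ left total from $\mathcal K$ to $\mathcal G'$, such that for all $A\in\mathcal K$: $A\in Q$ iff $A^\pi\models(\mathfrak T<)\varphi$. $Q$ is traversal-invariant definable if it is a boolean combination of basic traversal-invariant definable queries over $\mathcal K$. *)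

theory Defs
  imports Main
begin

text \<open>A signature is a pair (number of binary relation symbols, number of constant symbols).\<close>

type_synonym sig = "nat \<times> nat"

datatype trm = V nat | C nat

datatype fm = Eq trm trm | R nat trm trm | Neg fm | Conj fm fm | Exi nat fm

record 'a struc =
  univ :: "'a set"
  rel :: "nat \<Rightarrow> 'a \<Rightarrow> 'a \<Rightarrow> bool"
  cst :: "nat \<Rightarrow> 'a"

fun wf_trm :: "sig \<Rightarrow> trm \<Rightarrow> bool" where
  "wf_trm S (V i) = True"
| "wf_trm S (C c) = (c < snd S)"

fun wf_fm :: "sig \<Rightarrow> fm \<Rightarrow> bool" where
  "wf_fm S (Eq t u) = (wf_trm S t \<and> wf_trm S u)"
| "wf_fm S (R r t u) = (r < fst S \<and> wf_trm S t \<and> wf_trm S u)"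
| "wf_fm S (Neg \<phi>) = wf_fm S \<phi>"
| "wf_fm S (Conj \<phi> \<psi>) = (wf_fm S \<phi> \<and> wf_fm S \<psi>)"
| "wf_fm S (Exi x \<phi>) = wf_fm S \<phi>"

fun fvt :: "trm \<Rightarrow> nat set" where
  "fvt (V i) = {i}"
| "fvt (C c) = {}"

fun fv :: "fm \<Rightarrow> nat set" where
  "fv (Eq t u) = fvt t \<union> fvt u"
| "fv (R r t u) = fvt t \<union> fvt u"
| "fv (Neg \<phi>) = fv \<phi>"
| "fv (Conj \<phi> \<psi>) = fv \<phi> \<union> fv \<psi>"
| "fv (Exi x \<phi>) = fv \<phi> - {x}"

definition sentence :: "sig \<Rightarrow> fm \<Rightarrow> bool" where
  "sentence S \<phi> \<longleftrightarrow> wf_fm S \<phi> \<and> fv \<phi> = {}"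

fun evalt :: "('a, 'b) struc_scheme \<Rightarrow> (nat \<Rightarrow> 'a) \<Rightarrow> trm \<Rightarrow> 'a" where
  "evalt A \<sigma> (V i) = \<sigma> i"
| "evalt A \<sigma> (C c) = cst A c"

fun sat :: "('a, 'b) struc_scheme \<Rightarrow> (nat \<Rightarrow> 'a) \<Rightarrow> fm \<Rightarrow> bool" where
  "sat A \<sigma> (Eq t u) = (evalt A \<sigma> t = evalt A \<sigma> u)"
| "sat A \<sigma> (R r t u) = rel A r (evalt A \<sigma> t) (evalt A \<sigma> u)"
| "sat A \<sigma> (Neg \<phi>) = (\<not> sat A \<sigma> \<phi>)"
| "sat A \<sigma> (Conj \<phi> \<psi>) = (sat A \<sigma> \<phi> \<and> sat A \<sigma> \<psi>)"
| "sat A \<sigma> (Exi x \<phi>) = (\<exists>a\<in>univ A. sat A (\<sigma>(x := a)) \<phi>)"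

definition models :: "('a, 'b) struc_scheme \<Rightarrow> fm \<Rightarrow> bool" where
  "models A \<phi> \<longleftrightarrow> (\<forall>\<sigma>. sat A \<sigma> \<phi>)"

text \<open>An n-pointed graph is a Gamma_n-structure (signature (1,n)): relation symbol 0 is E,
  constants 0..n-1 are the distinguished vertices.\<close>

definition is_npgraph :: "nat \<Rightarrow> 'a struc \<Rightarrow> bool" where
  "is_npgraph n G \<longleftrightarrow> finite (univ G) \<and> univ G \<noteq> {} \<and>
     (\<forall>u\<in>univ G. \<forall>v\<in>univ G. rel G 0 u v \<longrightarrow> rel G 0 v u) \<and>
     (\<forall>u\<in>univ G. \<not> rel G 0 u u) \<and>
     (\<forall>c<n. cst G c \<in> univ G)"

definition npiso :: "nat \<Rightarrow> 'a struc \<Rightarrow> 'b struc \<Rightarrow> bool" where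
  "npiso n G H \<longleftrightarrow> (\<exists>f. bij_betw f (univ G) (univ H) \<and>
     (\<forall>u\<in>univ G. \<forall>v\<in>univ G. rel G 0 u v \<longleftrightarrow> rel H 0 (f u) (f v)) \<and>
     (\<forall>c<n. f (cst G c) = cst H c))"

definition is_traversal :: "'a struc \<Rightarrow> 'a list \<Rightarrow> bool" where
  "is_traversal G vs \<longleftrightarrow> distinct vs \<and> set vs = univ G \<and>
     (\<forall>i. 0 < i \<longrightarrow> i < length vs \<longrightarrow>
        (\<exists>j<i. \<exists>w\<in>univ G - set (take i vs). rel G 0 (vs ! j) w) \<longrightarrow>
        (\<exists>j<i. rel G 0 (vs ! j) (vs ! i)))"

definition order_of :: "'a list \<Rightarrow> 'a \<Rightarrow> 'a \<Rightarrow> bool" where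
  "order_of vs u v \<longleftrightarrow> (\<exists>i j. i < j \<and> j < length vs \<and> vs ! i = u \<and> vs ! j = v)"

text \<open>The expansion (G,<) is a (Gamma_n plus <)-structure, signature (2,n); symbol 1 is <.\<close>
definition expand :: "'a struc \<Rightarrow> 'a list \<Rightarrow> 'a struc" where
  "expand G vs = G\<lparr>rel := (rel G)(1 := order_of vs)\<rparr>"

definition trav_invariant :: "nat \<Rightarrow> 'a struc set \<Rightarrow> fm \<Rightarrow> bool" where
  "trav_invariant n GG \<phi> \<longleftrightarrow>
     (\<forall>G\<in>GG. \<forall>H\<in>GG. \<forall>vs ws. is_traversal G vs \<longrightarrow> is_traversal H ws \<longrightarrow> npiso n G H \<longrightarrow>
        (models (expand G vs) \<phi> \<longleftrightarrow> models (expand H ws) \<phi>))"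

definition trav_models :: "'a struc \<Rightarrow> fm \<Rightarrow> bool" where
  "trav_models G \<phi> \<longleftrightarrow> (\<exists>vs. is_traversal G vs \<and> models (expand G vs) \<phi>)"

record interp =
  arity :: nat
  dfm :: fm
  efm :: fm
  cdefs :: "nat \<Rightarrow> (fm \<times> trm list) list"

text \<open>The k-tuple of variables x-bar is x_0,...,x_{k-1}; y-bar is x_k,...,x_{2k-1}.
  Each constant c < n is given by a definition by cases: a list of (case sentence, k-tuple of
  closed terms); its value is the tuple of the first case that holds.\<close>

definition wf_interp :: "sig \<Rightarrow> nat \<Rightarrow> interp \<Rightarrow> bool" where
  "wf_interp K n \<pi> \<longleftrightarrow>
     wf_fm K (dfm \<pi>) \<and> fv (dfm \<pi>) \<subseteq> {..<arity \<pi>} \<and>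
     wf_fm K (efm \<pi>) \<and> fv (efm \<pi>) \<subseteq> {..<2 * arity \<pi>} \<and>
     (\<forall>c<n. \<forall>(\<psi>, ts)\<in>set (cdefs \<pi> c). sentence K \<psi> \<and> length ts = arity \<pi> \<and>
        (\<forall>t\<in>set ts. wf_trm K t \<and> fvt t = {}))"

definition tup :: "'a list \<Rightarrow> nat \<Rightarrow> 'a" where
  "tup xs i = xs ! i"

definition apply_interp :: "interp \<Rightarrow> 'a struc \<Rightarrow> 'a list struc" where
  "apply_interp \<pi> A =
     \<lparr> univ = {xs. length xs = arity \<pi> \<and> set xs \<subseteq> univ A \<and> sat A (tup xs) (dfm \<pi>)},
       rel = (\<lambda>r xs ys. r = 0 \<and> sat A (tup (xs @ ys)) (efm \<pi>)),
       cst = (\<lambda>c. case find (\<lambda>p. models A (fst p)) (cdefs \<pi> c) of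
                    Some p \<Rightarrow> map (evalt A (\<lambda>i. undefined)) (snd p)
                  | None \<Rightarrow> undefined) \<rparr>"

definition interp_defined :: "nat \<Rightarrow> interp \<Rightarrow> 'a struc \<Rightarrow> bool" where
  "interp_defined n \<pi> A \<longleftrightarrow> (\<forall>c<n. \<exists>p\<in>set (cdefs \<pi> c). models A (fst p))"

definition left_total :: "nat \<Rightarrow> interp \<Rightarrow> 'a struc set \<Rightarrow> 'a list struc set \<Rightarrow> bool" where
  "left_total n \<pi> KK GG \<longleftrightarrow> (\<forall>A\<in>KK. interp_defined n \<pi> A \<and> apply_interp \<pi> A \<in> GG)"

definition basic_tid :: "sig \<Rightarrow> 'a struc set \<Rightarrow> 'a struc set \<Rightarrow> bool" where
  "basic_tid K KK Q \<longleftrightarrow> Q \<subseteq> KK \<and>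
     (\<exists>n (GG :: 'a list struc set) \<phi> \<pi>.
        (\<forall>G\<in>GG. is_npgraph n G) \<and>
        sentence (2, n) \<phi> \<and> trav_invariant n GG \<phi> \<and>
        wf_interp K n \<pi> \<and> left_total n \<pi> KK GG \<and>
        (\<forall>A\<in>KK. A \<in> Q \<longleftrightarrow> trav_models (apply_interp \<pi> A) \<phi>))"

inductive tid :: "sig \<Rightarrow> 'a struc set \<Rightarrow> 'a struc set \<Rightarrow> bool" for K KK where
  basic: "basic_tid K KK Q \<Longrightarrow> tid K KK Q"
| compl: "tid K KK Q \<Longrightarrow> tid K KK (KK - Q)"
| inter: "tid K KK Q1 \<Longrightarrow> tid K KK Q2 \<Longrightarrow> tid K KK (Q1 \<inter> Q2)"

definition pointed2_graphs :: "nat struc set" where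
  "pointed2_graphs = {A. is_npgraph 2 A}"

definition edge_set :: "'a struc \<Rightarrow> ('a \<times> 'a) set" where
  "edge_set G = {(u, v). u \<in> univ G \<and> v \<in> univ G \<and> rel G 0 u v}"

definition st_conn :: "nat struc set" where
  "st_conn = {A \<in> pointed2_graphs. (cst A 0, cst A 1) \<in> (edge_set A)\<^sup>*}"

definition finite_graphs :: "nat struc set" where
  "finite_graphs = {A. is_npgraph 0 A}"

definition is_cycle :: "'a struc \<Rightarrow> 'a list \<Rightarrow> bool" where
  "is_cycle G cs \<longleftrightarrow> 3 \<le> length cs \<and> distinct cs \<and> set cs \<subseteq> univ G \<and>
     (\<forall>i<length cs. rel G 0 (cs ! i) (cs ! ((i + 1) mod length cs)))"

definition acyclic_graphs :: "nat struc set" where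
  "acyclic_graphs = {A \<in> finite_graphs. \<not> (\<exists>cs. is_cycle A cs)}"

definition bipartite_graphs :: "nat struc set" where
  "bipartite_graphs = {A \<in> finite_graphs. \<exists>X \<subseteq> univ A.
     \<forall>u\<in>univ A. \<forall>v\<in>univ A. rel A 0 u v \<longrightarrow> (u \<in> X \<longleftrightarrow> v \<notin> X)}"

text \<open>Finite (nonempty) strict linear orders, signature (1,0): relation symbol 0 is <.\<close>
definition linear_orders :: "nat struc set" where
  "linear_orders = {A. finite (univ A) \<and> univ A \<noteq> {} \<and>
     (\<forall>x\<in>univ A. \<not> rel A 0 x x) \<and>
     (\<forall>x\<in>univ A. \<forall>y\<in>univ A. \<forall>z\<in>univ A. rel A 0 x y \<longrightarrow> rel A 0 y z \<longrightarrow> rel A 0 x z) \<and>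
     (\<forall>x\<in>univ A. \<forall>y\<in>univ A. x = y \<or> rel A 0 x y \<or> rel A 0 y x)}"

definition even_linear_orders :: "nat struc set" where
  "even_linear_orders = {A \<in> linear_orders. even (card (univ A))}"

end

theory Submission
  imports Defs "HOL-Library.Transitive_Closure_Table"
begin

text \<open>In a traversal every connected component occupies an interval of the order, and the first
  vertex of the interval is its only vertex without an earlier neighbour. So two vertices are
  connected iff no vertex after the first and up to the second lacks an earlier neighbour: a
  first-order property of \<open>(G, <)\<close> whose truth does not depend on the traversal. This gives
  st-connectivity directly. A graph has a cycle iff, under a traversal, some vertex has two
  earlier neighbours: the last visited vertex of a cycle has two, and two earlier neighbours of
  \<open>v\<close> are already connected before \<open>v\<close>. A graph is not bipartite iff some \<open>(v, 0)\<close> and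
  \<open>(v, 1)\<close> are connected in its double cover; a five-dimensional interpretation marks these
  two vertices by triangles, and bipartiteness is the complement. Finally, a linear order of size
  \<open>n\<close> is interpreted as the graph joining elements whose ranks differ by two, together with the
  least and the greatest element; it is connected with at least two vertices iff \<open>n\<close> is even.\<close>

lemma evalt_cong: "\<forall>i\<in>fvt t. \<sigma> i = \<tau> i \<Longrightarrow> evalt A \<sigma> t = evalt A \<tau> t"
  by (cases t) auto

lemma sat_cong: "\<forall>i\<in>fv \<phi>. \<sigma> i = \<tau> i \<Longrightarrow> sat A \<sigma> \<phi> = sat A \<tau> \<phi>"
proof (induction \<phi> arbitrary: \<sigma> \<tau>)
  case (Eq t u)
  then show ?case using evalt_cong[of t \<sigma> \<tau> A] evalt_cong[of u \<sigma> \<tau> A] by auto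
next
  case (R r t u)
  then show ?case using evalt_cong[of t \<sigma> \<tau> A] evalt_cong[of u \<sigma> \<tau> A] by auto
next
  case (Conj \<phi> \<psi>)
  have "sat A \<sigma> \<phi> = sat A \<tau> \<phi>" "sat A \<sigma> \<psi> = sat A \<tau> \<psi>"
    using Conj.prems by (intro Conj.IH; auto)+
  then show ?case by simp
next
  case (Exi x \<phi>)
  have "sat A (\<sigma>(x := a)) \<phi> = sat A (\<tau>(x := a)) \<phi>" for a
    using Exi by (intro Exi.IH) auto
  then show ?case by simp
qed auto

lemma models_iff_sat: "fv \<phi> = {} \<Longrightarrow> models A \<phi> \<longleftrightarrow> sat A \<sigma> \<phi>"
  unfolding models_def using sat_cong[of \<phi> _ \<sigma> A] by auto

lemma sat_iso:
  fixes A :: "('a, 'c) struc_scheme" and B :: "('b, 'd) struc_scheme"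
  assumes bij: "bij_betw f (univ A) (univ B)"
    and rels: "\<And>r a b. r < nr \<Longrightarrow> a \<in> univ A \<Longrightarrow> b \<in> univ A \<Longrightarrow> rel A r a b \<longleftrightarrow> rel B r (f a) (f b)"
    and csts: "\<And>c. c < nc \<Longrightarrow> cst A c \<in> univ A \<and> f (cst A c) = cst B c"
    and wf: "wf_fm (nr, nc) \<phi>"
    and \<sigma>: "\<And>i. \<sigma> i \<in> univ A"
  shows "sat A \<sigma> \<phi> \<longleftrightarrow> sat B (f \<circ> \<sigma>) \<phi>"
  using wf \<sigma>
proof (induction \<phi> arbitrary: \<sigma>)
  have evalt: "evalt A \<sigma> t \<in> univ A \<and> evalt B (f \<circ> \<sigma>) t = f (evalt A \<sigma> t)"
    if "wf_trm (nr, nc) t" "\<And>i. \<sigma> i \<in> univ A" for t \<sigma>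
    using that csts by (cases t) auto
  have inj: "inj_on f (univ A)" using bij bij_betw_def by blast
  {
    case (Eq t u)
    then show ?case using evalt[of t \<sigma>] evalt[of u \<sigma>] inj by (simp add: inj_on_eq_iff o_def)
  next
    case (R r t u)
    then show ?case using evalt[of t \<sigma>] evalt[of u \<sigma>] rels by (simp add: o_def)
  next
    case (Exi x \<phi>)
    have "sat A (\<sigma>(x := a)) \<phi> \<longleftrightarrow> sat B ((f \<circ> \<sigma>)(x := f a)) \<phi>" if "a \<in> univ A" for a
    proof -
      have "sat A (\<sigma>(x := a)) \<phi> \<longleftrightarrow> sat B (f \<circ> (\<sigma>(x := a))) \<phi>"
        using Exi that by (intro Exi.IH) auto
      moreover have "(f \<circ> \<sigma>)(x := f a) = f \<circ> (\<sigma>(x := a))" by auto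
      ultimately show ?thesis by (simp only:)
    qed
    moreover have "univ B = f ` univ A" using bij by (simp add: bij_betw_def)
    ultimately show ?case by (auto simp: o_def)
  }
qed auto

lemma distinct_nth_in_set_take_iff:
  assumes "distinct vs" "j < length vs"
  shows "vs ! j \<in> set (take k vs) \<longleftrightarrow> j < k"
proof
  assume "vs ! j \<in> set (take k vs)"
  then obtain m where "m < k" "m < length vs" "vs ! m = vs ! j"
    by (auto simp: in_set_conv_nth)
  with assms show "j < k" by (simp add: nth_eq_iff_index_eq)
next
  assume "j < k"
  with assms show "vs ! j \<in> set (take k vs)"
    by (metis in_set_conv_nth length_take min_less_iff_conj nth_take)
qed

lemma order_of_nth_iff:
  assumes "distinct vs" "i < length vs" "j < length vs"
  shows "order_of vs (vs ! i) (vs ! j) \<longleftrightarrow> i < j"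
  using assms unfolding order_of_def by (metis nth_eq_iff_index_eq order.strict_trans)

lemma order_of_map_iff:
  assumes "set vs \<subseteq> U" "inj_on f U" "a \<in> U" "b \<in> U"
  shows "order_of (map f vs) (f a) (f b) \<longleftrightarrow> order_of vs a b"
proof
  assume "order_of (map f vs) (f a) (f b)"
  then obtain i j where ij: "i < j" "j < length vs" "f (vs ! i) = f a" "f (vs ! j) = f b"
    unfolding order_of_def by auto
  moreover have "vs ! i \<in> U" "vs ! j \<in> U" using ij assms(1) by auto
  ultimately have "vs ! i = a" "vs ! j = b" using assms by (auto dest: inj_onD)
  then show "order_of vs a b" using ij unfolding order_of_def by auto
next
  assume "order_of vs a b"
  then show "order_of (map f vs) (f a) (f b)" unfolding order_of_def by force
qed

lemma expand_simps [simp]: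
  "univ (expand G vs) = univ G" "rel (expand G vs) 0 = rel G 0"
  "rel (expand G vs) (Suc 0) = order_of vs" "cst (expand G vs) = cst G"
  unfolding expand_def by auto

definition visits_frontier :: "'a struc \<Rightarrow> 'a list \<Rightarrow> bool" where
  "visits_frontier G ps \<longleftrightarrow> (\<forall>i. 0 < i \<longrightarrow> i < length ps \<longrightarrow>
     (\<exists>j<i. \<exists>w\<in>univ G - set (take i ps). rel G 0 (ps ! j) w) \<longrightarrow>
     (\<exists>j<i. rel G 0 (ps ! j) (ps ! i)))"

lemma is_traversal_iff:
  "is_traversal G vs \<longleftrightarrow> distinct vs \<and> set vs = univ G \<and> visits_frontier G vs"
  unfolding is_traversal_def visits_frontier_def ..

lemma visits_frontier_snoc:
  assumes ps: "visits_frontier G ps"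
    and v: "(\<exists>j<length ps. \<exists>w\<in>univ G - set ps. rel G 0 (ps ! j) w) \<Longrightarrow>
            (\<exists>j<length ps. rel G 0 (ps ! j) v)"
  shows "visits_frontier G (ps @ [v])"
  unfolding visits_frontier_def
proof (intro allI impI)
  fix i assume i: "0 < i" "i < length (ps @ [v])"
    and ex: "\<exists>j<i. \<exists>w\<in>univ G - set (take i (ps @ [v])). rel G 0 ((ps @ [v]) ! j) w"
  have take: "take i (ps @ [v]) = take i ps" using i by simp
  have nth: "(ps @ [v]) ! j = ps ! j" if "j < i" for j
    using i that by (simp add: nth_append)
  have front: "\<exists>j<i. \<exists>w\<in>univ G - set (take i ps). rel G 0 (ps ! j) w"
    using ex unfolding take by (metis nth)
  show "\<exists>j<i. rel G 0 ((ps @ [v]) ! j) ((ps @ [v]) ! i)"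
  proof (cases "i < length ps")
    case True
    then obtain j where "j < i" "rel G 0 (ps ! j) (ps ! i)"
      using ps i(1) front unfolding visits_frontier_def by blast
    then show ?thesis using True nth by (intro exI[of _ j]) (simp add: nth_append)
  next
    case False
    with i have i_eq: "i = length ps" by simp
    then obtain j where "j < i" "rel G 0 (ps ! j) v" using v front by auto
    then show ?thesis using i_eq nth by (intro exI[of _ j]) simp
  qed
qed

lemma traversal_extends:
  assumes "finite (univ G)" "distinct ps" "set ps \<subseteq> univ G" "visits_frontier G ps"
  shows "\<exists>vs. is_traversal G (ps @ vs)"
  using assms
proof (induction "card (univ G - set ps)" arbitrary: ps)
  case 0
  then have "set ps = univ G" by auto
  with 0 have "is_traversal G (ps @ [])" unfolding is_traversal_iff by simp
  then show ?case ..
next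
  case (Suc m)
  then have ne: "univ G - set ps \<noteq> {}" by auto
  obtain v where v: "v \<in> univ G - set ps"
    and nb: "(\<exists>j<length ps. \<exists>w\<in>univ G - set ps. rel G 0 (ps ! j) w) \<Longrightarrow>
             (\<exists>j<length ps. rel G 0 (ps ! j) v)"
  proof (cases "\<exists>j<length ps. \<exists>w\<in>univ G - set ps. rel G 0 (ps ! j) w")
    case True
    then obtain j w where "j < length ps" "w \<in> univ G - set ps" "rel G 0 (ps ! j) w" by blast
    then show ?thesis using that[of w] by blast
  qed (use ne in blast)
  have "univ G - set (ps @ [v]) = (univ G - set ps) - {v}" by auto
  then have "card (univ G - set (ps @ [v])) = m"
    using Suc.hyps(2) v Suc.prems(1) by (simp add: card_Diff_singleton)
  moreover have "visits_frontier G (ps @ [v])" by (rule visits_frontier_snoc[OF Suc.prems(4) nb])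
  ultimately obtain vs where "is_traversal G ((ps @ [v]) @ vs)"
    using Suc.hyps(1)[of "ps @ [v]"] Suc.prems v by auto
  then have "is_traversal G (ps @ v # vs)" by simp
  then show ?case ..
qed

lemma traversal_exists: "finite (univ G) \<Longrightarrow> \<exists>vs. is_traversal G vs"
  using traversal_extends[of G "[]"] by (simp add: visits_frontier_def)

lemma is_traversal_map:
  assumes tr: "is_traversal G vs"
    and bij: "bij_betw f (univ G) (univ H)"
    and edges: "\<And>a b. a \<in> univ G \<Longrightarrow> b \<in> univ G \<Longrightarrow> rel G 0 a b \<longleftrightarrow> rel H 0 (f a) (f b)"
  shows "is_traversal H (map f vs)"
proof -
  have d: "distinct vs" and s: "set vs = univ G" and vf: "visits_frontier G vs"
    using tr by (auto simp: is_traversal_iff)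
  have inj: "inj_on f (univ G)" and im: "f ` univ G = univ H" using bij by (auto simp: bij_betw_def)
  have fvs: "map f vs ! k = f (vs ! k)" "vs ! k \<in> univ G" if "k < length vs" for k
    using that by (simp_all add: s[symmetric])
  have "visits_frontier H (map f vs)"
    unfolding visits_frontier_def
  proof (intro allI impI)
    fix i assume i: "0 < i" "i < length (map f vs)"
      and "\<exists>j<i. \<exists>w\<in>univ H - set (take i (map f vs)). rel H 0 (map f vs ! j) w"
    then obtain j w where j: "j < i" and w: "w \<in> univ H" "w \<notin> set (take i (map f vs))"
      and r: "rel H 0 (map f vs ! j) w" by blast
    obtain w' where w': "w' \<in> univ G" "w = f w'" using w(1) im by blast
    have jl: "j < length vs" using i j by simp
    have "w' \<notin> set (take i vs)" using w w' by (auto simp: take_map)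
    moreover have "rel G 0 (vs ! j) w'" using edges[OF fvs(2)[OF jl] w'(1)] r w' fvs(1)[OF jl] by simp
    ultimately have "\<exists>j<i. \<exists>w\<in>univ G - set (take i vs). rel G 0 (vs ! j) w" using j w'(1) by blast
    moreover have il: "i < length vs" using i by simp
    ultimately obtain k where k: "k < i" "rel G 0 (vs ! k) (vs ! i)"
      using vf i(1) unfolding visits_frontier_def by blast
    have "k < length vs" using k il by simp
    with il show "\<exists>j<i. rel H 0 (map f vs ! j) (map f vs ! i)"
      using k edges fvs by (intro exI[of _ k]) simp
  qed
  then show ?thesis using d s inj im by (simp add: is_traversal_iff distinct_map)
qed

lemma models_expand_map:
  assumes G: "is_npgraph n G" and \<phi>: "sentence (2, n) \<phi>" and tr: "is_traversal G vs"
    and bij: "bij_betw f (univ G) (univ H)"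
    and edges: "\<And>u v. u \<in> univ G \<Longrightarrow> v \<in> univ G \<Longrightarrow> rel G 0 u v \<longleftrightarrow> rel H 0 (f u) (f v)"
    and csts: "\<And>c. c < n \<Longrightarrow> f (cst G c) = cst H c"
  shows "models (expand G vs) \<phi> \<longleftrightarrow> models (expand H (map f vs)) \<phi>"
proof -
  obtain u0 where u0: "u0 \<in> univ G" using G unfolding is_npgraph_def by blast
  have inj: "inj_on f (univ G)" using bij by (simp add: bij_betw_def)
  have sv: "set vs = univ G" using tr by (simp add: is_traversal_def)
  have fv: "fv \<phi> = {}" and wf: "wf_fm (2, n) \<phi>" using \<phi> unfolding sentence_def by auto
  have "sat (expand G vs) (\<lambda>_. u0) \<phi> \<longleftrightarrow> sat (expand H (map f vs)) (f \<circ> (\<lambda>_. u0)) \<phi>"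
  proof (rule sat_iso[OF _ _ _ wf])
    fix r :: nat and a b assume "r < 2" "a \<in> univ (expand G vs)" "b \<in> univ (expand G vs)"
    then show "rel (expand G vs) r a b = rel (expand H (map f vs)) r (f a) (f b)"
      using edges order_of_map_iff[of vs "univ G" f a b] sv inj by (cases r) auto
  qed (use bij u0 csts G in \<open>auto simp: is_npgraph_def\<close>)
  then show ?thesis using models_iff_sat[OF fv] by metis
qed

lemma trav_invariantI:
  assumes graphs: "\<And>G. G \<in> GG \<Longrightarrow> is_npgraph n G" and \<phi>: "sentence (2, n) \<phi>"
    and indep: "\<And>G vs ws. G \<in> GG \<Longrightarrow> is_traversal G vs \<Longrightarrow> is_traversal G ws \<Longrightarrow>
                 models (expand G vs) \<phi> \<longleftrightarrow> models (expand G ws) \<phi>"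
  shows "trav_invariant n GG \<phi>"
  unfolding trav_invariant_def
proof (intro ballI allI impI)
  fix G H vs ws assume G: "G \<in> GG" and H: "H \<in> GG"
    and vs: "is_traversal G vs" and ws: "is_traversal H ws" and "npiso n G H"
  then obtain f where bij: "bij_betw f (univ G) (univ H)"
    and edges: "\<And>u v. u \<in> univ G \<Longrightarrow> v \<in> univ G \<Longrightarrow> rel G 0 u v \<longleftrightarrow> rel H 0 (f u) (f v)"
    and csts: "\<And>c. c < n \<Longrightarrow> f (cst G c) = cst H c"
    unfolding npiso_def by blast
  have "models (expand G vs) \<phi> \<longleftrightarrow> models (expand H (map f vs)) \<phi>"
    by (rule models_expand_map[OF graphs[OF G] \<phi> vs bij edges csts])
  also have "\<dots> \<longleftrightarrow> models (expand H ws) \<phi>"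
    using indep[OF H is_traversal_map[OF vs bij edges] ws] .
  finally show "models (expand G vs) \<phi> \<longleftrightarrow> models (expand H ws) \<phi>" .
qed

lemma basic_tidI:
  fixes KK :: "'a struc set" and P :: "'a list struc \<Rightarrow> bool"
  assumes "Q \<subseteq> KK" and \<pi>: "wf_interp K n \<pi>" and \<phi>: "sentence (2, n) \<phi>"
    and graphs: "\<And>A. A \<in> KK \<Longrightarrow> interp_defined n \<pi> A \<and> is_npgraph n (apply_interp \<pi> A)"
    and expresses: "\<And>G vs. is_npgraph n G \<Longrightarrow> is_traversal G vs \<Longrightarrow> models (expand G vs) \<phi> \<longleftrightarrow> P G"
    and query: "\<And>A. A \<in> KK \<Longrightarrow> A \<in> Q \<longleftrightarrow> P (apply_interp \<pi> A)"
  shows "basic_tid K KK Q"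
proof -
  define GG where "GG = {G :: 'a list struc. is_npgraph n G}"
  have "trav_invariant n GG \<phi>"
    by (rule trav_invariantI[OF _ \<phi>]) (use expresses in \<open>auto simp: GG_def\<close>)
  moreover have "left_total n \<pi> KK GG" using graphs unfolding left_total_def GG_def by blast
  moreover have "A \<in> Q \<longleftrightarrow> trav_models (apply_interp \<pi> A) \<phi>" if A: "A \<in> KK" for A
  proof -
    have G: "is_npgraph n (apply_interp \<pi> A)" using graphs[OF A] by blast
    then obtain vs where "is_traversal (apply_interp \<pi> A) vs"
      using traversal_exists unfolding is_npgraph_def by blast
    then show ?thesis using query[OF A] expresses[OF G] unfolding trav_models_def by blast
  qed
  ultimately show ?thesis using assms(1) \<pi> \<phi> unfolding basic_tid_def GG_def by blast
qed

section \<open>Connectivity under a traversal\<close>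

definition no_earlier_nbr :: "'a struc \<Rightarrow> 'a list \<Rightarrow> nat \<Rightarrow> bool" where
  "no_earlier_nbr G vs i \<longleftrightarrow> \<not> (\<exists>j<i. rel G 0 (vs ! j) (vs ! i))"

lemma prefix_closed_at_no_earlier_nbr:
  assumes tr: "is_traversal G vs" and i: "i < length vs" "no_earlier_nbr G vs i"
    and ab: "(a, b) \<in> (edge_set G)\<^sup>*" and a: "a \<in> set (take i vs)"
  shows "b \<in> set (take i vs)"
  using ab a
proof (induction rule: rtrancl_induct)
  case (step y z)
  then obtain j where j: "j < i" "vs ! j = y" by (auto simp: in_set_conv_nth)
  have "z \<in> univ G" "rel G 0 y z" using step(2) unfolding edge_set_def by auto
  show ?case
  proof (rule ccontr)
    assume "z \<notin> set (take i vs)"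
    with j \<open>z \<in> univ G\<close> \<open>rel G 0 y z\<close>
    have "\<exists>j<i. \<exists>w\<in>univ G - set (take i vs). rel G 0 (vs ! j) w" by blast
    then have "\<exists>j<i. rel G 0 (vs ! j) (vs ! i)"
      using tr i(1) j(1) unfolding is_traversal_def by (metis gr_zeroI not_less0)
    with i(2) show False unfolding no_earlier_nbr_def by blast
  qed
qed simp

lemma reaches_from_no_earlier_nbr:
  assumes tr: "is_traversal G vs" and r: "no_earlier_nbr G vs r"
  shows "r \<le> j \<Longrightarrow> j < length vs \<Longrightarrow> (\<forall>k. r < k \<and> k \<le> j \<longrightarrow> \<not> no_earlier_nbr G vs k) \<Longrightarrow>
    (vs ! r, vs ! j) \<in> (Restr (edge_set G) (set (take (Suc j) vs)))\<^sup>*"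
proof (induction j rule: less_induct)
  case (less j)
  have d: "distinct vs" and s: "set vs = univ G" using tr by (auto simp: is_traversal_def)
  show ?case
  proof (cases "j = r")
    case False
    with less.prems have "r < j" "\<not> no_earlier_nbr G vs j" by auto
    then obtain k where k: "k < j" "rel G 0 (vs ! k) (vs ! j)" unfolding no_earlier_nbr_def by blast
    have vj: "vs ! j \<notin> set (take r vs)"
      using distinct_nth_in_set_take_iff[OF d] less.prems by simp
    have "r \<le> k"
    proof (rule ccontr)
      assume "\<not> r \<le> k"
      then have "vs ! k \<in> set (take r vs)" using distinct_nth_in_set_take_iff[OF d] k less.prems by simp
      moreover have "(vs ! k, vs ! j) \<in> edge_set G"
        using k less.prems s unfolding edge_set_def by auto
      ultimately show False
        using prefix_closed_at_no_earlier_nbr[OF tr _ r] vj less.prems by auto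
    qed
    then have "(vs ! r, vs ! k) \<in> (Restr (edge_set G) (set (take (Suc k) vs)))\<^sup>*"
      using less.IH[of k] k less.prems by auto
    moreover have "Restr (edge_set G) (set (take (Suc k) vs)) \<subseteq> Restr (edge_set G) (set (take (Suc j) vs))"
      using set_take_subset_set_take[of "Suc k" "Suc j" vs] k by auto
    moreover have "(vs ! k, vs ! j) \<in> Restr (edge_set G) (set (take (Suc j) vs))"
      using k less.prems s distinct_nth_in_set_take_iff[OF d] unfolding edge_set_def by auto
    ultimately show ?thesis by (meson rtrancl_into_rtrancl rtrancl_mono subsetD)
  qed simp
qed

lemma connected_within_prefix:
  assumes tr: "is_traversal G vs" and sym: "sym (edge_set G)"
    and ij: "i \<le> j" "j < length vs" and none: "\<forall>k. i < k \<and> k \<le> j \<longrightarrow> \<not> no_earlier_nbr G vs k"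
  shows "(vs ! i, vs ! j) \<in> (Restr (edge_set G) (set (take (Suc j) vs)))\<^sup>*"
proof -
  define S where "S = {k. k \<le> i \<and> no_earlier_nbr G vs k}"
  define r where "r = Max S"
  have fin: "finite S" and "0 \<in> S" unfolding S_def by (simp_all add: no_earlier_nbr_def)
  then have "r \<in> S" unfolding r_def by (intro Max_in) auto
  then have r: "r \<le> i" "no_earlier_nbr G vs r" unfolding S_def by auto
  have rmax: "k \<le> r" if "k \<le> i" "no_earlier_nbr G vs k" for k
    unfolding r_def using fin that by (intro Max_ge) (auto simp: S_def)
  have between: "\<forall>k. r < k \<and> k \<le> l \<longrightarrow> \<not> no_earlier_nbr G vs k" if "l \<le> j" for l
    using none rmax that by (meson le_trans not_le)
  let ?R = "Restr (edge_set G) (set (take (Suc j) vs))"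
  have "(vs ! r, vs ! i) \<in> (Restr (edge_set G) (set (take (Suc i) vs)))\<^sup>*"
    using reaches_from_no_earlier_nbr[OF tr r(2) r(1)] between[OF ij(1)] ij by simp
  moreover have "Restr (edge_set G) (set (take (Suc i) vs)) \<subseteq> ?R"
    using set_take_subset_set_take[of "Suc i" "Suc j" vs] ij by auto
  ultimately have "(vs ! r, vs ! i) \<in> ?R\<^sup>*" using rtrancl_mono by blast
  moreover have "(vs ! r, vs ! j) \<in> ?R\<^sup>*"
    using reaches_from_no_earlier_nbr[OF tr r(2)] between[of j] r ij by simp
  moreover have "sym ?R" using sym unfolding sym_def by blast
  ultimately show ?thesis by (meson rtrancl_trans symD sym_rtrancl)
qed

lemma traversal_connected_iff:
  assumes tr: "is_traversal G vs" and sym: "sym (edge_set G)" and ij: "i \<le> j" "j < length vs"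
  shows "(vs ! i, vs ! j) \<in> (edge_set G)\<^sup>* \<longleftrightarrow> (\<forall>k. i < k \<and> k \<le> j \<longrightarrow> \<not> no_earlier_nbr G vs k)"
proof
  assume conn: "(vs ! i, vs ! j) \<in> (edge_set G)\<^sup>*"
  have d: "distinct vs" using tr by (simp add: is_traversal_def)
  show "\<forall>k. i < k \<and> k \<le> j \<longrightarrow> \<not> no_earlier_nbr G vs k"
  proof (intro allI impI notI)
    fix k assume k: "i < k \<and> k \<le> j" "no_earlier_nbr G vs k"
    have "vs ! i \<in> set (take k vs)" using distinct_nth_in_set_take_iff[OF d] k ij by simp
    then have "vs ! j \<in> set (take k vs)"
      using prefix_closed_at_no_earlier_nbr[OF tr _ k(2) conn] k ij by simp
    then show False using distinct_nth_in_set_take_iff[OF d] k ij by simp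
  qed
next
  assume "\<forall>k. i < k \<and> k \<le> j \<longrightarrow> \<not> no_earlier_nbr G vs k"
  then show "(vs ! i, vs ! j) \<in> (edge_set G)\<^sup>*"
    using connected_within_prefix[OF tr sym ij] rtrancl_mono[of _ "edge_set G"] by blast
qed

abbreviation Disj :: "fm \<Rightarrow> fm \<Rightarrow> fm" where "Disj \<phi> \<psi> \<equiv> Neg (Conj (Neg \<phi>) (Neg \<psi>))"
abbreviation Adj :: "trm \<Rightarrow> trm \<Rightarrow> fm" where "Adj t u \<equiv> R 0 t u"
abbreviation Less :: "trm \<Rightarrow> trm \<Rightarrow> fm" where "Less t u \<equiv> R 1 t u"

text \<open>No vertex \<open>w\<close> after one of \<open>s\<close>, \<open>t\<close> and up to the other lacks an earlier
  neighbour \<open>u\<close>.\<close>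

definition conn_fm :: "trm \<Rightarrow> trm \<Rightarrow> nat \<Rightarrow> nat \<Rightarrow> fm" where
  "conn_fm s t w u = Neg (Exi w (Conj
      (Disj (Conj (Less s (V w)) (Disj (Less (V w) t) (Eq (V w) t)))
            (Conj (Less t (V w)) (Disj (Less (V w) s) (Eq (V w) s))))
      (Neg (Exi u (Conj (Less (V u) (V w)) (Adj (V u) (V w)))))))"

lemma fv_conn_fm [simp]: "fv (conn_fm s t w u) = fvt s \<union> fvt t - {w}"
  unfolding conn_fm_def by auto

lemma wf_conn_fm [simp]: "wf_fm S (conn_fm s t w u) \<longleftrightarrow> 1 < fst S \<and> wf_trm S s \<and> wf_trm S t"
  unfolding conn_fm_def by auto

lemma evalt_expand [simp]: "evalt (expand G vs) \<sigma> t = evalt G \<sigma> t"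
  by (cases t) auto

lemma evalt_upd: "x \<notin> fvt t \<Longrightarrow> evalt A (\<sigma>(x := a)) t = evalt A \<sigma> t"
  by (cases t) auto

lemma sat_conn_fm_iff_index:
  assumes tr: "is_traversal G vs" and i: "i < length vs" and j: "j < length vs"
    and vars: "w \<notin> fvt s \<union> fvt t" "u \<notin> fvt s \<union> fvt t" "w \<noteq> u"
    and st: "evalt G \<sigma> s = vs ! i" "evalt G \<sigma> t = vs ! j"
  shows "sat (expand G vs) \<sigma> (conn_fm s t w u) \<longleftrightarrow>
    \<not> (\<exists>k<length vs. (i < k \<and> k \<le> j \<or> j < k \<and> k \<le> i) \<and> no_earlier_nbr G vs k)"
proof -
  have d: "distinct vs" and U: "univ G = set vs" using tr by (auto simp: is_traversal_def)
  have less: "order_of vs (vs ! p) (vs ! q) \<longleftrightarrow> p < q" if "p < length vs" "q < length vs" for p q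
    using order_of_nth_iff[OF d that] .
  have eq: "vs ! p = vs ! q \<longleftrightarrow> p = q" if "p < length vs" "q < length vs" for p q
    using d that by (simp add: nth_eq_iff_index_eq)
  have ex: "(\<exists>c\<in>set vs. P c) \<longleftrightarrow> (\<exists>k<length vs. P (vs ! k))" for P
    by (metis in_set_conv_nth)
  have nbr: "(\<exists>m. order_of vs (vs ! m) (vs ! k) \<and> m < length vs \<and> rel G 0 (vs ! m) (vs ! k)) \<longleftrightarrow>
      \<not> no_earlier_nbr G vs k" if "k < length vs" for k
    using that less unfolding no_earlier_nbr_def by (meson order.strict_trans)
  show ?thesis
    using vars unfolding conn_fm_def
    by (simp add: evalt_upd st U ex less eq i j nbr le_less cong: conj_cong)
qed

lemma sat_conn_fm:
  assumes tr: "is_traversal G vs" and sym: "sym (edge_set G)"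
    and vars: "w \<notin> fvt s \<union> fvt t" "u \<notin> fvt s \<union> fvt t" "w \<noteq> u"
    and st: "evalt G \<sigma> s \<in> univ G" "evalt G \<sigma> t \<in> univ G"
  shows "sat (expand G vs) \<sigma> (conn_fm s t w u) \<longleftrightarrow> (evalt G \<sigma> s, evalt G \<sigma> t) \<in> (edge_set G)\<^sup>*"
proof -
  have U: "univ G = set vs" using tr by (simp add: is_traversal_def)
  obtain i j where i: "i < length vs" "evalt G \<sigma> s = vs ! i" and j: "j < length vs" "evalt G \<sigma> t = vs ! j"
    using st unfolding U by (metis in_set_conv_nth)
  have rev: "(x, y) \<in> (edge_set G)\<^sup>* \<longleftrightarrow> (y, x) \<in> (edge_set G)\<^sup>*" for x y
    using sym_rtrancl[OF sym] by (auto dest: symD)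
  have "sat (expand G vs) \<sigma> (conn_fm s t w u) \<longleftrightarrow>
      \<not> (\<exists>k<length vs. (i < k \<and> k \<le> j \<or> j < k \<and> k \<le> i) \<and> no_earlier_nbr G vs k)"
    by (rule sat_conn_fm_iff_index[OF tr i(1) j(1) vars i(2) j(2)])
  also have "\<dots> \<longleftrightarrow> (vs ! i, vs ! j) \<in> (edge_set G)\<^sup>*"
  proof (cases "i \<le> j")
    case True
    then show ?thesis using traversal_connected_iff[OF tr sym True j(1)] j(1) by auto
  next
    case False
    then show ?thesis using traversal_connected_iff[OF tr sym _ i(1), of j] i(1) rev by auto
  qed
  finally show ?thesis using i j by simp
qed

lemma npgraph_sym_edge_set: "is_npgraph n G \<Longrightarrow> sym (edge_set G)"
  unfolding is_npgraph_def edge_set_def sym_def by blast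

lemma sym_edge_setD: "sym (edge_set G) \<Longrightarrow> u \<in> univ G \<Longrightarrow> v \<in> univ G \<Longrightarrow> rel G 0 u v \<Longrightarrow> rel G 0 v u"
  unfolding sym_def edge_set_def by blast

lemma rtrancl_map:
  assumes "(a, b) \<in> r\<^sup>*" and "\<And>x y. (x, y) \<in> r \<Longrightarrow> (f x, f y) \<in> s"
  shows "(f a, f b) \<in> s\<^sup>*"
  using assms(1) by induction (auto intro: rtrancl_into_rtrancl assms(2))

lemma is_cycle_hom:
  assumes c: "is_cycle G cs" and inj: "inj_on f (univ G)"
    and hom: "\<And>x y. x \<in> univ G \<Longrightarrow> y \<in> univ G \<Longrightarrow> rel G 0 x y \<Longrightarrow>
      f x \<in> univ H \<and> f y \<in> univ H \<and> rel H 0 (f x) (f y)"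
  shows "is_cycle H (map f cs)"
proof -
  have l: "3 \<le> length cs" and s: "set cs \<subseteq> univ G"
    and r: "\<And>i. i < length cs \<Longrightarrow> rel G 0 (cs ! i) (cs ! ((i + 1) mod length cs))"
    using c unfolding is_cycle_def by auto
  have succ_lt: "(i + 1) mod length cs < length cs" for i using l by (intro mod_less_divisor) linarith
  have edge: "f (cs ! i) \<in> univ H \<and> rel H 0 (f (cs ! i)) (f (cs ! ((i + 1) mod length cs)))"
    if i: "i < length cs" for i
  proof -
    have "cs ! i \<in> univ G" "cs ! ((i + 1) mod length cs) \<in> univ G"
      using s nth_mem[OF i] nth_mem[OF succ_lt] by auto
    then show ?thesis using hom r[OF i] by blast
  qed
  have "distinct (map f cs)" using c inj s by (simp add: is_cycle_def distinct_map inj_on_subset)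
  moreover have "set (map f cs) \<subseteq> univ H" using edge by (auto simp: in_set_conv_nth)
  ultimately show ?thesis using l edge succ_lt unfolding is_cycle_def by simp
qed

definition unary_interp :: "fm \<Rightarrow> (nat \<Rightarrow> (fm \<times> trm list) list) \<Rightarrow> interp" where
  "unary_interp e cd = \<lparr>arity = 1, dfm = Eq (V 0) (V 0), efm = e, cdefs = cd\<rparr>"

lemma univ_unary_interp: "univ (apply_interp (unary_interp e cd) A) = (\<lambda>x. [x]) ` univ A"
proof -
  have "{xs. length xs = 1 \<and> set xs \<subseteq> univ A} = (\<lambda>x. [x]) ` univ A"
    by (auto simp: length_Suc_conv)
  then show ?thesis unfolding apply_interp_def unary_interp_def by simp
qed

lemma rel_unary_interp:
  "rel (apply_interp (unary_interp e cd) A) r [a] [b] \<longleftrightarrow> r = 0 \<and> sat A (tup [a, b]) e"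
  unfolding apply_interp_def unary_interp_def by simp

lemma tup_simps [simp]: "tup [a, b] 0 = a" "tup [a, b] (Suc 0) = b"
  unfolding tup_def by simp_all

definition copy_interp :: interp where
  "copy_interp = unary_interp (Adj (V 0) (V 1)) (\<lambda>c. [(Eq (C c) (C c), [C c])])"

lemma cst_copy_interp: "cst (apply_interp copy_interp A) c = [cst A c]"
  unfolding apply_interp_def copy_interp_def unary_interp_def models_def by simp

lemma rel_copy_interp: "rel (apply_interp copy_interp A) 0 [a] [b] \<longleftrightarrow> rel A 0 a b"
  unfolding copy_interp_def rel_unary_interp by simp

lemma univ_copy_interp: "univ (apply_interp copy_interp A) = (\<lambda>x. [x]) ` univ A"
  unfolding copy_interp_def by (rule univ_unary_interp)

lemma wf_copy_interp: "wf_interp (1, n) n copy_interp"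
  unfolding wf_interp_def copy_interp_def unary_interp_def sentence_def by auto

lemma copy_interp_npgraph:
  assumes A: "is_npgraph n A"
  shows "interp_defined n copy_interp A \<and> is_npgraph n (apply_interp copy_interp A)"
proof
  show "interp_defined n copy_interp A"
    unfolding interp_defined_def copy_interp_def unary_interp_def models_def by simp
  show "is_npgraph n (apply_interp copy_interp A)"
    using A unfolding is_npgraph_def univ_copy_interp by (auto simp: cst_copy_interp rel_copy_interp)
qed

lemma rtrancl_copy_interp_iff:
  "([a], [b]) \<in> (edge_set (apply_interp copy_interp A))\<^sup>* \<longleftrightarrow> (a, b) \<in> (edge_set A)\<^sup>*"
proof
  assume "([a], [b]) \<in> (edge_set (apply_interp copy_interp A))\<^sup>*"
  then have "(hd [a], hd [b]) \<in> (edge_set A)\<^sup>*"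
    by (rule rtrancl_map) (auto simp: edge_set_def univ_copy_interp rel_copy_interp)
  then show "(a, b) \<in> (edge_set A)\<^sup>*" by simp
qed (rule rtrancl_map, auto simp: edge_set_def univ_copy_interp rel_copy_interp)

lemma cycle_copy_interp_iff:
  "(\<exists>cs. is_cycle (apply_interp copy_interp A) cs) \<longleftrightarrow> (\<exists>cs. is_cycle A cs)"
proof
  assume "\<exists>cs. is_cycle (apply_interp copy_interp A) cs"
  then obtain cs where "is_cycle (apply_interp copy_interp A) cs" ..
  then have "is_cycle A (map hd cs)"
    by (rule is_cycle_hom) (auto simp: univ_copy_interp rel_copy_interp inj_on_def)
  then show "\<exists>cs. is_cycle A cs" ..
next
  assume "\<exists>cs. is_cycle A cs"
  then obtain cs where "is_cycle A cs" ..
  then have "is_cycle (apply_interp copy_interp A) (map (\<lambda>x. [x]) cs)"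
    by (rule is_cycle_hom) (auto simp: univ_copy_interp rel_copy_interp inj_on_def)
  then show "\<exists>cs. is_cycle (apply_interp copy_interp A) cs" ..
qed

section \<open>st-connectivity\<close>

lemma tid_st_conn: "tid (1, 2) pointed2_graphs st_conn"
proof (rule tid.basic, rule basic_tidI)
  show "wf_interp (1, 2) 2 copy_interp" by (rule wf_copy_interp)
  show "sentence (2, 2) (conn_fm (C 0) (C 1) 2 3)" by (simp add: sentence_def)
  show "\<And>A. A \<in> pointed2_graphs \<Longrightarrow>
      interp_defined 2 copy_interp A \<and> is_npgraph 2 (apply_interp copy_interp A)"
    by (rule copy_interp_npgraph) (simp add: pointed2_graphs_def)
  show "models (expand G vs) (conn_fm (C 0) (C 1) 2 3) \<longleftrightarrow> (cst G 0, cst G 1) \<in> (edge_set G)\<^sup>*"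
    if G: "is_npgraph 2 G" and tr: "is_traversal G vs" for G :: "nat list struc" and vs
  proof -
    have "models (expand G vs) (conn_fm (C 0) (C 1) 2 3) \<longleftrightarrow>
        sat (expand G vs) undefined (conn_fm (C 0) (C 1) 2 3)"
      by (rule models_iff_sat) simp
    also have "\<dots> \<longleftrightarrow> (cst G 0, cst G 1) \<in> (edge_set G)\<^sup>*"
      using G by (subst sat_conn_fm[OF tr npgraph_sym_edge_set[OF G]]) (auto simp: is_npgraph_def)
    finally show ?thesis .
  qed
  show "A \<in> st_conn \<longleftrightarrow> (cst (apply_interp copy_interp A) 0, cst (apply_interp copy_interp A) 1)
      \<in> (edge_set (apply_interp copy_interp A))\<^sup>*" if "A \<in> pointed2_graphs" for A
    using that by (simp add: st_conn_def cst_copy_interp rtrancl_copy_interp_iff)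
qed (simp add: st_conn_def)

section \<open>Acyclicity\<close>

lemma is_cycle_of_path:
  assumes path: "rtrancl_path (\<lambda>x y. (x, y) \<in> edge_set G) v ys b"
    and dist: "distinct (v # ys)" and len: "2 \<le> length ys" and closing: "rel G 0 b v"
  shows "is_cycle G (v # ys)"
proof -
  have ne: "ys \<noteq> []" using len by (cases ys) auto
  have edge: "((v # ys) ! i, ys ! i) \<in> edge_set G" if "i < length ys" for i
    using rtrancl_path_nth[OF path that] .
  have "set (v # ys) \<subseteq> univ G"
  proof -
    have "v \<in> univ G" using edge[of 0] ne by (simp add: edge_set_def)
    moreover have "ys ! i \<in> univ G" if "i < length ys" for i
      using edge[OF that] by (simp add: edge_set_def)
    ultimately show ?thesis by (auto simp: in_set_conv_nth)
  qed
  moreover have "rel G 0 ((v # ys) ! i) ((v # ys) ! ((i + 1) mod length (v # ys)))"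
    if i: "i < length (v # ys)" for i
  proof (cases "i = length ys")
    case True
    have "(v # ys) ! i = last ys" using True len by (cases ys rule: rev_cases) (auto simp: nth_append)
    also have "\<dots> = b" using rtrancl_path_last[OF path ne] .
    finally show ?thesis using True closing by simp
  next
    case False
    with i have "i < length ys" by simp
    then show ?thesis using edge unfolding edge_set_def by simp
  qed
  ultimately show ?thesis using dist len unfolding is_cycle_def by simp
qed

lemma cycle_if_nbrs_connected_avoiding:
  assumes sym: "sym (edge_set G)" and conn: "(a, b) \<in> (Restr (edge_set G) P)\<^sup>*"
    and "a \<noteq> b" "a \<in> P" "v \<notin> P" and inU: "v \<in> univ G" "a \<in> univ G"
    and nbrs: "rel G 0 a v" "rel G 0 b v"
  shows "\<exists>cs. is_cycle G cs"
proof -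
  have "(\<lambda>x y. (x, y) \<in> Restr (edge_set G) P)\<^sup>*\<^sup>* a b" using conn by (simp add: rtrancl_def)
  then obtain xs0 where "rtrancl_path (\<lambda>x y. (x, y) \<in> Restr (edge_set G) P) a xs0 b"
    unfolding rtranclp_eq_rtrancl_path by blast
  then obtain xs where path: "rtrancl_path (\<lambda>x y. (x, y) \<in> Restr (edge_set G) P) a xs b"
    and dist: "distinct (a # xs)"
    by (rule rtrancl_path_distinct)
  have "xs \<noteq> []" using path \<open>a \<noteq> b\<close> by (auto elim: rtrancl_path.cases)
  have "set xs \<subseteq> P" using rtrancl_path_Range[OF path] by blast
  then have dist': "distinct (v # a # xs)" using dist \<open>a \<in> P\<close> \<open>v \<notin> P\<close> by auto
  have path': "rtrancl_path (\<lambda>x y. (x, y) \<in> edge_set G) v (a # xs) b"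
  proof (rule rtrancl_path.step)
    show "(v, a) \<in> edge_set G"
      using sym_edge_setD[OF sym inU(2,1) nbrs(1)] inU unfolding edge_set_def by simp
    show "rtrancl_path (\<lambda>x y. (x, y) \<in> edge_set G) a xs b"
      using path by (rule rtrancl_path_mono) simp
  qed
  have "2 \<le> length (a # xs)" using \<open>xs \<noteq> []\<close> by (cases xs) auto
  then have "is_cycle G (v # a # xs)" by (rule is_cycle_of_path[OF path' dist' _ nbrs(2)])
  then show ?thesis ..
qed

lemma cycle_through_earlier_nbrs:
  assumes tr: "is_traversal G vs" and sym: "sym (edge_set G)"
    and ij: "i < j" "j < p" "p < length vs"
    and nbrs: "rel G 0 (vs ! i) (vs ! p)" "rel G 0 (vs ! j) (vs ! p)"
  shows "\<exists>cs. is_cycle G cs"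
proof -
  have d: "distinct vs" and U: "set vs = univ G" using tr by (auto simp: is_traversal_def)
  have inU: "vs ! k \<in> univ G" if "k < length vs" for k using that unfolding U[symmetric] by simp
  have take_iff: "vs ! k \<in> set (take m vs) \<longleftrightarrow> k < m" if "k < length vs" for k m
    using distinct_nth_in_set_take_iff[OF d that] .
  have "\<forall>k. i < k \<and> k \<le> j \<longrightarrow> \<not> no_earlier_nbr G vs k"
  proof (intro allI impI notI)
    fix k assume k: "i < k \<and> k \<le> j" "no_earlier_nbr G vs k"
    have "(vs ! i, vs ! p) \<in> (edge_set G)\<^sup>*"
      using nbrs(1) inU ij unfolding edge_set_def by auto
    then have "vs ! p \<in> set (take k vs)"
      using prefix_closed_at_no_earlier_nbr[OF tr _ k(2)] take_iff k ij by auto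
    then show False using take_iff k ij by simp
  qed
  then have "(vs ! i, vs ! j) \<in> (Restr (edge_set G) (set (take (Suc j) vs)))\<^sup>*"
    using connected_within_prefix[OF tr sym] ij by simp
  moreover have "Restr (edge_set G) (set (take (Suc j) vs)) \<subseteq> Restr (edge_set G) (set (take p vs))"
    using set_take_subset_set_take[of "Suc j" p vs] ij by auto
  ultimately have conn: "(vs ! i, vs ! j) \<in> (Restr (edge_set G) (set (take p vs)))\<^sup>*"
    using rtrancl_mono by blast
  have "vs ! i \<noteq> vs ! j" using d ij by (simp add: nth_eq_iff_index_eq)
  moreover have "vs ! i \<in> set (take p vs)" "vs ! p \<notin> set (take p vs)" using take_iff ij by simp_all
  moreover have "vs ! p \<in> univ G" "vs ! i \<in> univ G" using inU ij by simp_all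
  ultimately show ?thesis by (rule cycle_if_nbrs_connected_avoiding[OF sym conn _ _ _ _ _ nbrs])
qed

definition two_earlier_nbrs :: "'a struc \<Rightarrow> 'a list \<Rightarrow> bool" where
  "two_earlier_nbrs G vs \<longleftrightarrow> (\<exists>v\<in>univ G. \<exists>a\<in>univ G. \<exists>b\<in>univ G.
     order_of vs a v \<and> order_of vs b v \<and> rel G 0 a v \<and> rel G 0 b v \<and> a \<noteq> b)"

lemma cycle_if_two_earlier_nbrs:
  assumes tr: "is_traversal G vs" and sym: "sym (edge_set G)" and nbrs: "two_earlier_nbrs G vs"
  shows "\<exists>cs. is_cycle G cs"
proof -
  have d: "distinct vs" and U: "univ G = set vs" using tr by (auto simp: is_traversal_def)
  obtain v a b where "v \<in> set vs" "a \<in> set vs" "b \<in> set vs" "a \<noteq> b"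
    and o: "order_of vs a v" "order_of vs b v" and e: "rel G 0 a v" "rel G 0 b v"
    using nbrs unfolding two_earlier_nbrs_def U by blast
  then obtain p i j where p: "p < length vs" "vs ! p = v" and "i < length vs" "vs ! i = a"
    and "j < length vs" "vs ! j = b"
    by (metis in_set_conv_nth)
  with o e \<open>a \<noteq> b\<close> have i: "i < p" and j: "j < p" and "i \<noteq> j"
    and e: "rel G 0 (vs ! i) (vs ! p)" "rel G 0 (vs ! j) (vs ! p)"
    using order_of_nth_iff[OF d] by auto
  then consider "i < j" | "j < i" by linarith
  then show ?thesis
    by cases (use cycle_through_earlier_nbrs[OF tr sym] p i j e in blast)+
qed

lemma last_in_order:
  assumes d: "distinct vs" and S: "S \<subseteq> set vs" "S \<noteq> {}"
  obtains v where "v \<in> S" "\<And>y. y \<in> S \<Longrightarrow> y \<noteq> v \<Longrightarrow> order_of vs y v"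
proof -
  define I where "I = {i. i < length vs \<and> vs ! i \<in> S}"
  obtain x where "x \<in> S" using S(2) by blast
  moreover from this have "x \<in> set vs" using S(1) by blast
  then obtain i where "i < length vs" "vs ! i = x" by (auto simp: in_set_conv_nth)
  ultimately have "I \<noteq> {}" unfolding I_def by auto
  moreover have "finite I" unfolding I_def by simp
  ultimately have m: "Max I \<in> I" and ge: "\<And>i. i \<in> I \<Longrightarrow> i \<le> Max I" by simp_all
  show thesis
  proof (rule that)
    show "vs ! Max I \<in> S" using m unfolding I_def by simp
    fix y assume y: "y \<in> S" "y \<noteq> vs ! Max I"
    then have "y \<in> set vs" using S(1) by blast
    then obtain i where i: "i < length vs" "vs ! i = y" by (auto simp: in_set_conv_nth)
    then have "i \<le> Max I" "i \<noteq> Max I" using ge y unfolding I_def by auto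
    then show "order_of vs y (vs ! Max I)" using order_of_nth_iff[OF d i(1)] m i unfolding I_def by simp
  qed
qed

lemma two_earlier_nbrs_if_cycle:
  assumes tr: "is_traversal G vs" and sym: "sym (edge_set G)" and c: "is_cycle G cs"
  shows "two_earlier_nbrs G vs"
proof -
  define L where "L = length cs"
  have L: "3 \<le> L" and dc: "distinct cs" and s: "set cs \<subseteq> univ G"
    and r: "\<And>i. i < L \<Longrightarrow> rel G 0 (cs ! i) (cs ! ((i + 1) mod L))"
    using c unfolding is_cycle_def L_def by auto
  have d: "distinct vs" and U: "univ G = set vs" using tr by (auto simp: is_traversal_def)
  have "set cs \<noteq> {}" using L unfolding L_def by auto
  then obtain v where v: "v \<in> set cs" and before: "\<And>y. y \<in> set cs \<Longrightarrow> y \<noteq> v \<Longrightarrow> order_of vs y v"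
    using last_in_order[OF d, of "set cs"] s unfolding U by blast
  obtain k where k: "k < L" "cs ! k = v" using v unfolding L_def by (auto simp: in_set_conv_nth)
  define ka where "ka = (if k + 1 = L then 0 else k + 1)"
  define kb where "kb = (if k = 0 then L - 1 else k - 1)"
  have idx: "ka < L" "kb < L" "ka \<noteq> k" "kb \<noteq> k" "ka \<noteq> kb" "(k + 1) mod L = ka" "(kb + 1) mod L = k"
    using k L unfolding ka_def kb_def by auto
  have neq: "cs ! x \<noteq> cs ! y" if "x < L" "y < L" "x \<noteq> y" for x y
    using dc that unfolding L_def by (simp add: nth_eq_iff_index_eq)
  have inU: "cs ! x \<in> univ G" if "x < L" for x using that s unfolding L_def by auto
  have "rel G 0 (cs ! ka) v" using sym_edge_setD[OF sym] r[OF k(1)] inU k idx by auto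
  moreover have "rel G 0 (cs ! kb) v" using r[OF idx(2)] k idx by simp
  moreover have "order_of vs (cs ! ka) v" "order_of vs (cs ! kb) v"
    using before neq idx k unfolding L_def by (metis nth_mem)+
  moreover have "cs ! ka \<noteq> cs ! kb" using neq idx by simp
  moreover have "v \<in> univ G" "cs ! ka \<in> univ G" "cs ! kb \<in> univ G" using inU idx k by auto
  ultimately show ?thesis unfolding two_earlier_nbrs_def by blast
qed

definition fork_fm :: fm where
  "fork_fm = Exi 0 (Exi 1 (Exi 2 (Conj (Less (V 1) (V 0)) (Conj (Less (V 2) (V 0))
     (Conj (Adj (V 1) (V 0)) (Conj (Adj (V 2) (V 0)) (Neg (Eq (V 1) (V 2)))))))))"

lemma sat_fork_fm: "sat (expand G vs) \<sigma> fork_fm \<longleftrightarrow> two_earlier_nbrs G vs"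
  unfolding fork_fm_def two_earlier_nbrs_def by auto

lemma tid_acyclic: "tid (1, 0) finite_graphs acyclic_graphs"
proof (rule tid.basic, rule basic_tidI)
  show "wf_interp (1, 0) 0 copy_interp" by (rule wf_copy_interp)
  show "sentence (2, 0) (Neg fork_fm)" by (auto simp: sentence_def fork_fm_def)
  show "\<And>A. A \<in> finite_graphs \<Longrightarrow>
      interp_defined 0 copy_interp A \<and> is_npgraph 0 (apply_interp copy_interp A)"
    by (rule copy_interp_npgraph) (simp add: finite_graphs_def)
  show "models (expand G vs) (Neg fork_fm) \<longleftrightarrow> \<not> (\<exists>cs. is_cycle G cs)"
    if G: "is_npgraph 0 G" and tr: "is_traversal G vs" for G :: "nat list struc" and vs
    using cycle_if_two_earlier_nbrs[OF tr] two_earlier_nbrs_if_cycle[OF tr] npgraph_sym_edge_set[OF G]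
    by (auto simp: models_def sat_fork_fm)
  show "A \<in> acyclic_graphs \<longleftrightarrow> \<not> (\<exists>cs. is_cycle (apply_interp copy_interp A) cs)"
    if "A \<in> finite_graphs" for A
    using that by (simp add: acyclic_graphs_def cycle_copy_interp_iff)
qed (simp add: acyclic_graphs_def)

section \<open>Bipartiteness\<close>

definition double_cover :: "'a struc \<Rightarrow> (('a \<times> bool) \<times> ('a \<times> bool)) set" where
  "double_cover A = {((x, i), (y, j)). x \<in> univ A \<and> y \<in> univ A \<and> rel A 0 x y \<and> i \<noteq> j}"

lemma double_cover_reaches:
  assumes "(r, x) \<in> (edge_set A)\<^sup>*"
  shows "\<exists>b. ((r, False), (x, b)) \<in> (double_cover A)\<^sup>*"
  using assms
proof (induction rule: rtrancl_induct)
  case (step y z)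
  then obtain b where "((r, False), (y, b)) \<in> (double_cover A)\<^sup>*" by blast
  moreover have "((y, b), (z, \<not> b)) \<in> double_cover A"
    using step(2) unfolding edge_set_def double_cover_def by auto
  ultimately show ?case by (blast intro: rtrancl_into_rtrancl)
qed blast

lemma sym_double_cover:
  assumes "sym (edge_set A)"
  shows "sym (double_cover A)"
  unfolding double_cover_def sym_def using sym_edge_setD[OF assms] by auto

lemma double_cover_parity_unique:
  assumes sym: "sym (edge_set A)" and sep: "((x, False), (x, True)) \<notin> (double_cover A)\<^sup>*"
    and "(p, (x, b)) \<in> (double_cover A)\<^sup>*" "(p, (x, c)) \<in> (double_cover A)\<^sup>*"
  shows "b = c"
proof (rule ccontr)
  assume "b \<noteq> c"
  have rev: "(q, q') \<in> (double_cover A)\<^sup>* \<Longrightarrow> (q', q) \<in> (double_cover A)\<^sup>*" for q q'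
    using sym_double_cover[OF sym] by (meson sym_rtrancl symD)
  have "((x, b), (x, c)) \<in> (double_cover A)\<^sup>*" using assms(3,4) rev by (meson rtrancl_trans)
  then have "((x, False), (x, True)) \<in> (double_cover A)\<^sup>*" using \<open>b \<noteq> c\<close> rev by (cases b) auto
  with sep show False by contradiction
qed

text \<open>Colour each vertex by the parity of its walks from a fixed vertex of its component.\<close>

lemma bipartite_if_double_cover_separates:
  assumes sym: "sym (edge_set A)"
    and sep: "\<And>v. v \<in> univ A \<Longrightarrow> ((v, False), (v, True)) \<notin> (double_cover A)\<^sup>*"
  shows "\<exists>X\<subseteq>univ A. \<forall>u\<in>univ A. \<forall>v\<in>univ A. rel A 0 u v \<longrightarrow> (u \<in> X \<longleftrightarrow> v \<notin> X)"
proof -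
  define root where "root x = (SOME r. r \<in> univ A \<and> (r, x) \<in> (edge_set A)\<^sup>*)" for x
  define parity where "parity x b \<longleftrightarrow> ((root x, False), (x, b)) \<in> (double_cover A)\<^sup>*" for x b
  have root: "root x \<in> univ A \<and> (root x, x) \<in> (edge_set A)\<^sup>*" if "x \<in> univ A" for x
    unfolding root_def by (rule someI[of _ x]) (use that in simp)
  have parity_ex: "\<exists>b. parity x b" if "x \<in> univ A" for x
    unfolding parity_def using root[OF that] by (intro double_cover_reaches) blast
  have parity_unique: "b = c" if "x \<in> univ A" "parity x b" "parity x c" for x b c
    using double_cover_parity_unique[OF sym sep] that unfolding parity_def by blast
  define X where "X = {x \<in> univ A. parity x False}"
  have "u \<in> X \<longleftrightarrow> v \<notin> X" if u: "u \<in> univ A" and v: "v \<in> univ A" and uv: "rel A 0 u v" for u v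
  proof -
    have "(u, v) \<in> edge_set A" "(v, u) \<in> edge_set A"
      using u v uv sym_edge_setD[OF sym] unfolding edge_set_def by auto
    then have "(\<lambda>r. r \<in> univ A \<and> (r, u) \<in> (edge_set A)\<^sup>*) = (\<lambda>r. r \<in> univ A \<and> (r, v) \<in> (edge_set A)\<^sup>*)"
      by (intro ext) (auto intro: rtrancl_into_rtrancl)
    then have "root u = root v" unfolding root_def by (simp only:)
    moreover obtain b where b: "parity u b" using parity_ex[OF u] ..
    moreover have "((u, b), (v, \<not> b)) \<in> double_cover A" using u v uv unfolding double_cover_def by auto
    ultimately have "parity v (\<not> b)" unfolding parity_def by (metis rtrancl_into_rtrancl)
    then show ?thesis using b parity_unique u v unfolding X_def by (cases b) auto
  qed
  moreover have "X \<subseteq> univ A" unfolding X_def by blast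
  ultimately show ?thesis by blast
qed

text \<open>For every pair \<open>v \<noteq> w\<close> of vertices of \<open>A\<close>, the interpretation below contains a copy of the
  double cover of \<open>A\<close>, the cover vertex \<open>(x, b)\<close> being \<open>[v, w, x, if b then w else v, v]\<close>,
  with two triangles glued on: the corners \<open>[v, w, c, v, w]\<close> and \<open>[v, w, c, w, w]\<close>, for
  \<open>c \<in> {v, w}\<close>, form a triangle with the cover vertex \<open>(v, c = w)\<close>. The vertices
  \<open>[v, v, v, v, v]\<close> only keep the universe nonempty. As the double cover is bipartite, these
  triangles are the only ones, so \<open>A\<close> is bipartite iff no two non-adjacent vertices on triangles
  are connected.\<close>

definition bip_vertex :: "'a \<Rightarrow> 'a \<Rightarrow> 'a \<Rightarrow> 'a \<Rightarrow> 'a \<Rightarrow> bool" where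
  "bip_vertex v w x y z \<longleftrightarrow>
     v \<noteq> w \<and> (z = v \<and> (y = v \<or> y = w) \<or> z = w \<and> (x = v \<or> x = w) \<and> (y = v \<or> y = w)) \<or>
     w = v \<and> x = v \<and> y = v \<and> z = v"

definition bip_dom_fm :: fm where
  "bip_dom_fm = Disj
     (Conj (Neg (Eq (V 0) (V 1)))
       (Disj (Conj (Eq (V 4) (V 0)) (Disj (Eq (V 3) (V 0)) (Eq (V 3) (V 1))))
             (Conj (Eq (V 4) (V 1)) (Conj (Disj (Eq (V 2) (V 0)) (Eq (V 2) (V 1)))
                                          (Disj (Eq (V 3) (V 0)) (Eq (V 3) (V 1)))))))
     (Conj (Eq (V 1) (V 0)) (Conj (Eq (V 2) (V 0)) (Conj (Eq (V 3) (V 0)) (Eq (V 4) (V 0)))))"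

definition bip_edge_fm :: fm where
  "bip_edge_fm = Conj (Conj (Eq (V 0) (V 5)) (Conj (Eq (V 1) (V 6)) (Neg (Eq (V 0) (V 1)))))
     (Disj (Conj (Eq (V 4) (V 0)) (Conj (Eq (V 9) (V 0)) (Conj (Neg (Eq (V 3) (V 8))) (Adj (V 2) (V 7)))))
     (Disj (Conj (Eq (V 4) (V 1)) (Conj (Eq (V 9) (V 1)) (Conj (Eq (V 2) (V 7)) (Neg (Eq (V 3) (V 8))))))
     (Disj (Conj (Eq (V 4) (V 1)) (Conj (Eq (V 9) (V 0)) (Conj (Eq (V 7) (V 0)) (Eq (V 8) (V 2)))))
           (Conj (Eq (V 9) (V 1)) (Conj (Eq (V 4) (V 0)) (Conj (Eq (V 2) (V 0)) (Eq (V 3) (V 7))))))))"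

definition bip_interp :: interp where
  "bip_interp = \<lparr>arity = 5, dfm = bip_dom_fm, efm = bip_edge_fm, cdefs = (\<lambda>_. [])\<rparr>"

abbreviation bip_graph :: "'a struc \<Rightarrow> 'a list struc" where
  "bip_graph A \<equiv> apply_interp bip_interp A"

lemma length_5_conv: "length p = 5 \<longleftrightarrow> (\<exists>v w x y z. p = [v, w, x, y, z])"
  by (auto simp: numeral_eq_Suc length_Suc_conv)

lemma bip_univ_iff:
  "[v, w, x, y, z] \<in> univ (bip_graph A) \<longleftrightarrow>
     v \<in> univ A \<and> w \<in> univ A \<and> x \<in> univ A \<and> y \<in> univ A \<and> z \<in> univ A \<and> bip_vertex v w x y z"
  unfolding apply_interp_def bip_interp_def bip_dom_fm_def bip_vertex_def
  by (auto simp: tup_def numeral_eq_Suc)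

lemma bip_univE:
  assumes "p \<in> univ (bip_graph A)"
  obtains v w x y z where "p = [v, w, x, y, z]"
  using assms unfolding apply_interp_def bip_interp_def by (auto simp: length_5_conv)

lemma bip_rel_iff:
  "rel (bip_graph A) 0 [v, w, x, y, z] [v', w', x', y', z'] \<longleftrightarrow>
     v' = v \<and> w' = w \<and> v \<noteq> w \<and>
     (z = v \<and> z' = v \<and> y \<noteq> y' \<and> rel A 0 x x' \<or>
      z = w \<and> z' = w \<and> x' = x \<and> y \<noteq> y' \<or>
      z = w \<and> z' = v \<and> x' = v \<and> y' = x \<or>
      z = v \<and> z' = w \<and> x = v \<and> y = x')"
  unfolding apply_interp_def bip_interp_def bip_edge_fm_def
  by (auto simp: tup_def numeral_eq_Suc)

lemma bip_npgraph:
  assumes A: "is_npgraph 0 A"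
  shows "is_npgraph 0 (bip_graph A)"
proof -
  let ?H = "bip_graph A"
  have "univ ?H \<subseteq> {p. set p \<subseteq> univ A \<and> length p = 5}" by (auto simp: apply_interp_def bip_interp_def)
  moreover have "finite {p. set p \<subseteq> univ A \<and> length p = 5}"
    using A finite_lists_length_eq unfolding is_npgraph_def by blast
  ultimately have "finite (univ ?H)" by (rule finite_subset)
  moreover obtain u where "u \<in> univ A" using A unfolding is_npgraph_def by blast
  then have "[u, u, u, u, u] \<in> univ ?H" by (simp add: bip_univ_iff bip_vertex_def)
  moreover have "rel ?H 0 q p" if p: "p \<in> univ ?H" and q: "q \<in> univ ?H" and pq: "rel ?H 0 p q" for p q
  proof -
    obtain v w x y z v' w' x' y' z' where "p = [v, w, x, y, z]" "q = [v', w', x', y', z']"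
      using p q by (metis bip_univE)
    then show ?thesis using p q pq A by (auto simp: bip_univ_iff bip_rel_iff is_npgraph_def)
  qed
  moreover have "\<not> rel ?H 0 p p" if p: "p \<in> univ ?H" for p
  proof -
    obtain v w x y z where "p = [v, w, x, y, z]" using p by (rule bip_univE)
    then show ?thesis using p A by (auto simp: bip_univ_iff bip_rel_iff is_npgraph_def)
  qed
  ultimately show ?thesis unfolding is_npgraph_def by blast
qed

definition on_triangle :: "'a struc \<Rightarrow> 'a \<Rightarrow> bool" where
  "on_triangle G p \<longleftrightarrow> (\<exists>a\<in>univ G. \<exists>b\<in>univ G. rel G 0 p a \<and> rel G 0 p b \<and> rel G 0 a b)"

definition connected_triangle_pair :: "'a struc \<Rightarrow> bool" where
  "connected_triangle_pair G \<longleftrightarrow> (\<exists>p\<in>univ G. \<exists>q\<in>univ G.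
     on_triangle G p \<and> on_triangle G q \<and> p \<noteq> q \<and> \<not> rel G 0 p q \<and> (p, q) \<in> (edge_set G)\<^sup>*)"

text \<open>With respect to a 2-colouring \<open>X\<close>, the cover vertex \<open>(x, b)\<close> gets colour
  \<open>(x \<in> X) \<noteq> b\<close>, and a corner of triangle \<open>c\<close> the colour of the cover vertex \<open>(v, c = w)\<close>.\<close>

definition bip_colour :: "'a set \<Rightarrow> 'a list \<Rightarrow> bool" where
  "bip_colour X p =
     (if p ! 4 = p ! 0 then (p ! 2 \<in> X) \<noteq> (p ! 3 = p ! 1) else (p ! 0 \<in> X) \<noteq> (p ! 2 = p ! 1))"

lemma bip_colour_invariant:
  assumes col: "\<And>u v. u \<in> univ A \<Longrightarrow> v \<in> univ A \<Longrightarrow> rel A 0 u v \<Longrightarrow> (u \<in> X \<longleftrightarrow> v \<notin> X)"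
    and pq: "(p, q) \<in> (edge_set (bip_graph A))\<^sup>*"
  shows "q ! 0 = p ! 0 \<and> q ! 1 = p ! 1 \<and> bip_colour X q = bip_colour X p"
  using pq
proof (induction rule: rtrancl_induct)
  case (step q r)
  then have q: "q \<in> univ (bip_graph A)" and r: "r \<in> univ (bip_graph A)"
    and e: "rel (bip_graph A) 0 q r" unfolding edge_set_def by auto
  obtain v w x y z v' w' x' y' z' where qr: "q = [v, w, x, y, z]" "r = [v', w', x', y', z']"
    using q r by (metis bip_univE)
  have "rel A 0 x x' \<Longrightarrow> (x \<in> X \<longleftrightarrow> x' \<notin> X)" using col q r unfolding qr bip_univ_iff by blast
  then have "r ! 0 = q ! 0 \<and> r ! 1 = q ! 1 \<and> bip_colour X r = bip_colour X q"
    using e q r unfolding qr bip_rel_iff bip_univ_iff bip_colour_def bip_vertex_def by auto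
  with step.IH show ?case by simp
qed simp

text \<open>The vertices on triangles: the cover vertices over \<open>v\<close> and the corners. Each lies on the
  single triangle given by \<open>bip_triangle\<close>.\<close>

definition bip_anchored :: "'a list \<Rightarrow> bool" where
  "bip_anchored p \<longleftrightarrow> p ! 0 \<noteq> p ! 1 \<and> (p ! 4 = p ! 1 \<or> p ! 2 = p ! 0)"

definition bip_triangle :: "'a list \<Rightarrow> 'a" where
  "bip_triangle p = (if p ! 4 = p ! 1 then p ! 2 else p ! 3)"

lemma bip_anchored_if_on_triangle:
  assumes p: "p \<in> univ (bip_graph A)" and t: "on_triangle (bip_graph A) p"
  shows "bip_anchored p"
proof (rule ccontr)
  assume na: "\<not> bip_anchored p"
  obtain a b where a: "a \<in> univ (bip_graph A)" and b: "b \<in> univ (bip_graph A)"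
    and pa: "rel (bip_graph A) 0 p a" and pb: "rel (bip_graph A) 0 p b"
    and ab: "rel (bip_graph A) 0 a b" using t unfolding on_triangle_def by blast
  obtain v w x y z va wa xa ya za vb wb xb yb zb
    where pp: "p = [v, w, x, y, z]" and aa: "a = [va, wa, xa, ya, za]" and bb: "b = [vb, wb, xb, yb, zb]"
    using p a b by (metis bip_univE)
  have "bip_vertex v w x y z" "bip_vertex va wa xa ya za" "bip_vertex vb wb xb yb zb"
    using p a b unfolding pp aa bb bip_univ_iff by auto
  moreover have "v \<noteq> w" "z \<noteq> w" "x \<noteq> v" using na pa unfolding bip_anchored_def pp aa bip_rel_iff by auto
  ultimately have "z = v" "va = v \<and> wa = w \<and> za = v \<and> ya \<noteq> y" "vb = v \<and> wb = w \<and> zb = v \<and> yb \<noteq> y"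
    using pa pb unfolding pp aa bb bip_rel_iff bip_vertex_def by auto
  with \<open>bip_vertex v w x y z\<close> \<open>bip_vertex va wa xa ya za\<close> \<open>bip_vertex vb wb xb yb zb\<close>
  have "ya = yb" unfolding bip_vertex_def by auto
  then show False using ab \<open>va = v \<and> wa = w \<and> za = v \<and> ya \<noteq> y\<close> \<open>vb = v \<and> wb = w \<and> zb = v \<and> yb \<noteq> y\<close>
    unfolding aa bb bip_rel_iff by auto
qed

lemma bip_rel_if_same_triangle:
  assumes p: "p \<in> univ (bip_graph A)" and q: "q \<in> univ (bip_graph A)"
    and "bip_anchored p" "bip_anchored q" "q ! 0 = p ! 0" "q ! 1 = p ! 1"
    and "bip_triangle q = bip_triangle p" "p \<noteq> q"
  shows "rel (bip_graph A) 0 p q"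
proof -
  obtain v w x y z v' w' x' y' z' where pq: "p = [v, w, x, y, z]" "q = [v', w', x', y', z']"
    using p q by (metis bip_univE)
  have "bip_vertex v w x y z" "bip_vertex v' w' x' y' z'" using p q unfolding pq bip_univ_iff by auto
  then show ?thesis using assms(3-)
    unfolding pq bip_rel_iff bip_vertex_def bip_anchored_def bip_triangle_def
    by (cases "z = w"; cases "z' = w") auto
qed

lemma bip_colour_anchored:
  assumes p: "p \<in> univ (bip_graph A)" and "bip_anchored p"
  shows "bip_colour X p = ((p ! 0 \<in> X) \<noteq> (bip_triangle p = p ! 1)) \<and>
    (bip_triangle p = p ! 0 \<or> bip_triangle p = p ! 1)"
proof -
  obtain v w x y z where pp: "p = [v, w, x, y, z]" using p by (rule bip_univE)
  have "bip_vertex v w x y z" using p unfolding pp bip_univ_iff by auto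
  then show ?thesis using assms(2)
    unfolding pp bip_vertex_def bip_anchored_def bip_triangle_def bip_colour_def by auto
qed

lemma no_connected_triangle_pair_if_bipartite:
  assumes col: "\<And>u v. u \<in> univ A \<Longrightarrow> v \<in> univ A \<Longrightarrow> rel A 0 u v \<Longrightarrow> (u \<in> X \<longleftrightarrow> v \<notin> X)"
  shows "\<not> connected_triangle_pair (bip_graph A)"
proof
  assume "connected_triangle_pair (bip_graph A)"
  then obtain p q where p: "p \<in> univ (bip_graph A)" and q: "q \<in> univ (bip_graph A)"
    and tri: "on_triangle (bip_graph A) p" "on_triangle (bip_graph A) q"
    and "p \<noteq> q" "\<not> rel (bip_graph A) 0 p q"
    and "(p, q) \<in> (edge_set (bip_graph A))\<^sup>*"
    unfolding connected_triangle_pair_def by blast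
  then have inv: "q ! 0 = p ! 0" "q ! 1 = p ! 1" "bip_colour X q = bip_colour X p"
    using bip_colour_invariant[OF col] by blast+
  have anch: "bip_anchored p" "bip_anchored q" using bip_anchored_if_on_triangle p q tri by blast+
  then have "bip_triangle q \<noteq> bip_triangle p"
    using bip_rel_if_same_triangle[OF p q] inv \<open>p \<noteq> q\<close> \<open>\<not> rel _ 0 p q\<close> by blast
  moreover have "p ! 0 \<noteq> p ! 1" using anch unfolding bip_anchored_def by simp
  ultimately show False
    using inv bip_colour_anchored[OF p anch(1), of X] bip_colour_anchored[OF q anch(2), of X] by auto
qed

definition cover_vertex :: "'a \<Rightarrow> 'a \<Rightarrow> 'a \<times> bool \<Rightarrow> 'a list" where
  "cover_vertex v w xb = [v, w, fst xb, if snd xb then w else v, v]"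

lemma rtrancl_cover_vertex:
  assumes "v \<noteq> w" "v \<in> univ A" "w \<in> univ A" and "(a, b) \<in> (double_cover A)\<^sup>*"
  shows "(cover_vertex v w a, cover_vertex v w b) \<in> (edge_set (bip_graph A))\<^sup>*"
  using assms(4) by (rule rtrancl_map)
    (use assms(1-3) in \<open>auto simp: double_cover_def edge_set_def cover_vertex_def bip_univ_iff
      bip_rel_iff bip_vertex_def\<close>)

lemma connected_triangle_pair_if_not_bipartite:
  assumes A: "is_npgraph 0 A"
    and nb: "\<not> (\<exists>X\<subseteq>univ A. \<forall>u\<in>univ A. \<forall>v\<in>univ A. rel A 0 u v \<longrightarrow> (u \<in> X \<longleftrightarrow> v \<notin> X))"
  shows "connected_triangle_pair (bip_graph A)"
proof -
  let ?H = "bip_graph A"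
  obtain v where v: "v \<in> univ A" and odd: "((v, False), (v, True)) \<in> (double_cover A)\<^sup>*"
    using bipartite_if_double_cover_separates[OF npgraph_sym_edge_set[OF A]] nb by blast
  then obtain w where w: "w \<in> univ A" "rel A 0 v w"
    by (auto simp: double_cover_def elim: converse_rtranclE)
  have vw: "v \<noteq> w" using w v A unfolding is_npgraph_def by auto
  define p where "p = [v, w, v, v, v]"
  define q where "q = [v, w, v, w, v]"
  have "(p, q) \<in> (edge_set ?H)\<^sup>*"
    using rtrancl_cover_vertex[OF vw v w(1) odd] unfolding p_def q_def cover_vertex_def by simp
  moreover have "on_triangle ?H p" unfolding on_triangle_def p_def
    using v w vw by (intro bexI[of _ "[v, w, v, v, w]"] bexI[of _ "[v, w, v, w, w]"])
      (auto simp: bip_univ_iff bip_rel_iff bip_vertex_def)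
  moreover have "on_triangle ?H q" unfolding on_triangle_def q_def
    using v w vw by (intro bexI[of _ "[v, w, w, v, w]"] bexI[of _ "[v, w, w, w, w]"])
      (auto simp: bip_univ_iff bip_rel_iff bip_vertex_def)
  moreover have "p \<in> univ ?H" "q \<in> univ ?H" "p \<noteq> q" "\<not> rel ?H 0 p q"
    unfolding p_def q_def using v w vw A
    by (auto simp: bip_univ_iff bip_rel_iff bip_vertex_def is_npgraph_def)
  ultimately show ?thesis unfolding connected_triangle_pair_def by blast
qed

definition triangle_fm :: "nat \<Rightarrow> fm" where
  "triangle_fm k = Exi 2 (Exi 3 (Conj (Adj (V k) (V 2)) (Conj (Adj (V k) (V 3)) (Adj (V 2) (V 3)))))"

definition triangle_pair_fm :: fm where
  "triangle_pair_fm = Exi 0 (Exi 1 (Conj (triangle_fm 0) (Conj (triangle_fm 1)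
     (Conj (Neg (Eq (V 0) (V 1))) (Conj (Neg (Adj (V 0) (V 1))) (conn_fm (V 0) (V 1) 4 5))))))"

lemma sat_triangle_fm: "k < 2 \<Longrightarrow> sat (expand G vs) \<sigma> (triangle_fm k) \<longleftrightarrow> on_triangle G (\<sigma> k)"
  unfolding triangle_fm_def on_triangle_def by (cases k) auto

lemma models_triangle_pair_fm:
  assumes G: "is_npgraph 0 G" and tr: "is_traversal G vs"
  shows "models (expand G vs) triangle_pair_fm \<longleftrightarrow> connected_triangle_pair G"
proof -
  have "models (expand G vs) triangle_pair_fm \<longleftrightarrow> sat (expand G vs) undefined triangle_pair_fm"
    by (rule models_iff_sat) (auto simp: triangle_pair_fm_def triangle_fm_def)
  also have "\<dots> \<longleftrightarrow> connected_triangle_pair G"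
    unfolding triangle_pair_fm_def connected_triangle_pair_def
    by (simp add: sat_triangle_fm sat_conn_fm[OF tr npgraph_sym_edge_set[OF G]] cong: bex_cong conj_cong)
  finally show ?thesis .
qed

lemma tid_bipartite: "tid (1, 0) finite_graphs bipartite_graphs"
proof -
  have "basic_tid (1, 0) finite_graphs (finite_graphs - bipartite_graphs)"
  proof (rule basic_tidI)
    show "wf_interp (1, 0) 0 bip_interp"
      unfolding wf_interp_def bip_interp_def bip_dom_fm_def bip_edge_fm_def by simp
    show "sentence (2, 0) triangle_pair_fm"
      by (auto simp: sentence_def triangle_pair_fm_def triangle_fm_def)
    show "\<And>A. A \<in> finite_graphs \<Longrightarrow> interp_defined 0 bip_interp A \<and> is_npgraph 0 (bip_graph A)"
      by (simp add: finite_graphs_def interp_defined_def bip_npgraph)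
    show "A \<in> finite_graphs - bipartite_graphs \<longleftrightarrow> connected_triangle_pair (bip_graph A)"
      if A: "A \<in> finite_graphs" for A
    proof
      assume "A \<in> finite_graphs - bipartite_graphs"
      with A show "connected_triangle_pair (bip_graph A)"
        by (intro connected_triangle_pair_if_not_bipartite)
          (auto simp: finite_graphs_def bipartite_graphs_def)
    next
      assume c: "connected_triangle_pair (bip_graph A)"
      show "A \<in> finite_graphs - bipartite_graphs"
      proof (rule ccontr)
        assume "A \<notin> finite_graphs - bipartite_graphs"
        with A obtain X where "\<forall>u\<in>univ A. \<forall>v\<in>univ A. rel A 0 u v \<longrightarrow> (u \<in> X \<longleftrightarrow> v \<notin> X)"
          unfolding bipartite_graphs_def by blast
        then have "\<not> connected_triangle_pair (bip_graph A)"
          by (intro no_connected_triangle_pair_if_bipartite) blast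
        with c show False by contradiction
      qed
    qed
  qed (auto simp: models_triangle_pair_fm)
  then have "tid (1, 0) finite_graphs (finite_graphs - (finite_graphs - bipartite_graphs))"
    by (intro tid.compl tid.basic)
  moreover have "finite_graphs - (finite_graphs - bipartite_graphs) = bipartite_graphs"
    unfolding bipartite_graphs_def by blast
  ultimately show ?thesis by simp
qed

section \<open>Linear orders of even size\<close>

definition skip_edges :: "nat \<Rightarrow> (nat \<times> nat) set" where
  "skip_edges n = {(i, j). i < n \<and> j < n \<and> i \<noteq> j \<and>
     (j = i + 2 \<or> i = j + 2 \<or> i = 0 \<and> j = n - 1 \<or> j = 0 \<and> i = n - 1)}"

lemma skip_edges_step_by_two: "i + 2 * k < n \<Longrightarrow> (i, i + 2 * k) \<in> (skip_edges n)\<^sup>*"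
proof (induction k)
  case (Suc k)
  then have "(i + 2 * k, i + 2 * Suc k) \<in> skip_edges n" by (simp add: skip_edges_def)
  with Suc show ?case by (simp add: rtrancl_into_rtrancl)
qed simp

lemma skip_edges_connected_if_even:
  assumes "even n" "i < n" "j < n"
  shows "(i, j) \<in> (skip_edges n)\<^sup>*"
proof -
  have "sym (skip_edges n)" unfolding skip_edges_def sym_def by auto
  then have rev: "(x, y) \<in> (skip_edges n)\<^sup>* \<Longrightarrow> (y, x) \<in> (skip_edges n)\<^sup>*" for x y
    by (meson sym_rtrancl symD)
  have from_0: "(0, m) \<in> (skip_edges n)\<^sup>*" if "m < n" for m
  proof (cases "even m")
    case True
    then show ?thesis using skip_edges_step_by_two[of 0 "m div 2" n] that by simp
  next
    case False
    with \<open>even n\<close> that have "m + 2 * ((n - 1 - m) div 2) = n - 1" "n - 1 < n" "0 \<noteq> n - 1"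
      by (auto elim!: evenE oddE)
    then have "(m, n - 1) \<in> (skip_edges n)\<^sup>*" "(n - 1, 0) \<in> skip_edges n"
      using skip_edges_step_by_two[of m "(n - 1 - m) div 2" n] by (auto simp: skip_edges_def)
    then have "(m, 0) \<in> (skip_edges n)\<^sup>*" by (rule rtrancl_into_rtrancl)
    then show ?thesis by (rule rev)
  qed
  show ?thesis using rev[OF from_0[OF \<open>i < n\<close>]] from_0[OF \<open>j < n\<close>] by (rule rtrancl_trans)
qed

text \<open>For odd \<open>n\<close> both \<open>0\<close> and \<open>n - 1\<close> are even, so every edge preserves parity.\<close>

lemma skip_edges_preserve_parity:
  assumes "odd n" "(i, j) \<in> (skip_edges n)\<^sup>*"
  shows "even i \<longleftrightarrow> even j"
  using assms(2) by induction (use assms(1) in \<open>auto simp: skip_edges_def\<close>)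

lemma skip_edges_connected_iff_even:
  assumes "0 < n"
  shows "2 \<le> n \<and> (\<forall>i<n. \<forall>j<n. (i, j) \<in> (skip_edges n)\<^sup>*) \<longleftrightarrow> even n"
proof
  assume "2 \<le> n \<and> (\<forall>i<n. \<forall>j<n. (i, j) \<in> (skip_edges n)\<^sup>*)"
  then show "even n" using skip_edges_preserve_parity[of n 0 1] by auto
next
  assume "even n"
  with assms have "2 \<le> n" by (auto elim: evenE)
  with \<open>even n\<close> show "2 \<le> n \<and> (\<forall>i<n. \<forall>j<n. (i, j) \<in> (skip_edges n)\<^sup>*)"
    using skip_edges_connected_if_even by blast
qed

definition two_above_fm :: "trm \<Rightarrow> trm \<Rightarrow> fm" where
  "two_above_fm s t = Exi 2 (Conj (R 0 s (V 2)) (Conj (R 0 (V 2) t)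
     (Neg (Exi 3 (Conj (R 0 s (V 3)) (Conj (R 0 (V 3) t) (Neg (Eq (V 3) (V 2)))))))))"

definition skip_fm :: fm where
  "skip_fm = Disj (two_above_fm (V 0) (V 1)) (Disj (two_above_fm (V 1) (V 0))
     (Conj (Neg (Eq (V 0) (V 1)))
       (Disj (Conj (Neg (Exi 3 (R 0 (V 3) (V 0)))) (Neg (Exi 3 (R 0 (V 1) (V 3)))))
             (Conj (Neg (Exi 3 (R 0 (V 3) (V 1)))) (Neg (Exi 3 (R 0 (V 0) (V 3))))))))"

definition skip_interp :: interp where
  "skip_interp = unary_interp skip_fm (\<lambda>_. [])"

definition connected_nontrivial :: "'a struc \<Rightarrow> bool" where
  "connected_nontrivial G \<longleftrightarrow>
     (\<exists>a\<in>univ G. \<exists>b\<in>univ G. a \<noteq> b) \<and> (\<forall>a\<in>univ G. \<forall>b\<in>univ G. (a, b) \<in> (edge_set G)\<^sup>*)"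

locale finite_linorder =
  fixes A :: "'a struc"
  assumes finite: "finite (univ A)" and nonempty: "univ A \<noteq> {}"
    and irrefl: "\<And>x. x \<in> univ A \<Longrightarrow> \<not> rel A 0 x x"
    and trans: "\<And>x y z. x \<in> univ A \<Longrightarrow> y \<in> univ A \<Longrightarrow> z \<in> univ A \<Longrightarrow>
      rel A 0 x y \<Longrightarrow> rel A 0 y z \<Longrightarrow> rel A 0 x z"
    and total: "\<And>x y. x \<in> univ A \<Longrightarrow> y \<in> univ A \<Longrightarrow> x = y \<or> rel A 0 x y \<or> rel A 0 y x"
begin

definition rank :: "'a \<Rightarrow> nat" where
  "rank x = card {y \<in> univ A. rel A 0 y x}"

lemma rank_mono:
  assumes "x \<in> univ A" "y \<in> univ A" "rel A 0 x y"
  shows "rank x < rank y"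
proof -
  have "{z \<in> univ A. rel A 0 z x} \<subset> {z \<in> univ A. rel A 0 z y}"
    using assms trans irrefl by blast
  then show ?thesis unfolding rank_def using finite by (simp add: psubset_card_mono)
qed

lemma rank_less_iff: "x \<in> univ A \<Longrightarrow> y \<in> univ A \<Longrightarrow> rel A 0 x y \<longleftrightarrow> rank x < rank y"
  using rank_mono total by (metis less_asym less_irrefl)

lemma rank_eq_iff: "x \<in> univ A \<Longrightarrow> y \<in> univ A \<Longrightarrow> rank x = rank y \<longleftrightarrow> x = y"
  using rank_mono total by (metis less_irrefl)

lemma rank_less_card: "x \<in> univ A \<Longrightarrow> rank x < card (univ A)"
  unfolding rank_def using finite irrefl by (intro psubset_card_mono) auto

definition unrank :: "nat \<Rightarrow> 'a" where
  "unrank = inv_into (univ A) rank"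

lemma rank_image: "rank ` univ A = {..<card (univ A)}"
proof -
  have "card (rank ` univ A) = card (univ A)"
    using rank_eq_iff by (intro card_image) (auto simp: inj_on_def)
  then show ?thesis using rank_less_card by (intro card_seteq) auto
qed

lemma unrank: "i < card (univ A) \<Longrightarrow> unrank i \<in> univ A \<and> rank (unrank i) = i"
  unfolding unrank_def using rank_image by (metis f_inv_into_f inv_into_into lessThan_iff)

lemma unrank_rank: "x \<in> univ A \<Longrightarrow> unrank (rank x) = x"
  using unrank rank_eq_iff rank_less_card by blast

lemma ex_less_card_iff: "(\<exists>i<card (univ A). P i) \<longleftrightarrow> (\<exists>x\<in>univ A. P (rank x))"
  using unrank rank_less_card by metis

lemma all_less_card_iff: "(\<forall>i<card (univ A). P i) \<longleftrightarrow> (\<forall>x\<in>univ A. P (rank x))"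
  using ex_less_card_iff[of "\<lambda>i. \<not> P i"] by blast

lemma two_above_iff:
  assumes a: "a \<in> univ A" and b: "b \<in> univ A"
  shows "(\<exists>c\<in>univ A. rel A 0 a c \<and> rel A 0 c b \<and> \<not> (\<exists>d\<in>univ A. rel A 0 a d \<and> rel A 0 d b \<and> d \<noteq> c))
    \<longleftrightarrow> rank b = rank a + 2"
proof -
  have "(\<exists>c\<in>univ A. rel A 0 a c \<and> rel A 0 c b \<and> \<not> (\<exists>d\<in>univ A. rel A 0 a d \<and> rel A 0 d b \<and> d \<noteq> c))
    \<longleftrightarrow> (\<exists>c\<in>univ A. rank a < rank c \<and> rank c < rank b \<and>
          \<not> (\<exists>d\<in>univ A. rank a < rank d \<and> rank d < rank b \<and> rank d \<noteq> rank c))"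
    using a b by (simp add: rank_less_iff rank_eq_iff cong: bex_cong conj_cong)
  also have "\<dots> \<longleftrightarrow> (\<exists>i<card (univ A). rank a < i \<and> i < rank b \<and>
          \<not> (\<exists>j<card (univ A). rank a < j \<and> j < rank b \<and> j \<noteq> i))"
    by (simp only: ex_less_card_iff)
  also have "\<dots> \<longleftrightarrow> rank b = rank a + 2" using rank_less_card[OF b] by presburger
  finally show ?thesis .
qed

lemma minimal_iff:
  assumes x: "x \<in> univ A"
  shows "\<not> (\<exists>d\<in>univ A. rel A 0 d x) \<longleftrightarrow> rank x = 0"
proof -
  have "(\<exists>d\<in>univ A. rel A 0 d x) \<longleftrightarrow> (\<exists>d\<in>univ A. rank d < rank x)"
    using x by (simp add: rank_less_iff cong: bex_cong)
  also have "\<dots> \<longleftrightarrow> (\<exists>i<card (univ A). i < rank x)" by (simp only: ex_less_card_iff)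
  also have "\<dots> \<longleftrightarrow> rank x \<noteq> 0" using rank_less_card[OF x] by presburger
  finally show ?thesis by simp
qed

lemma maximal_iff:
  assumes x: "x \<in> univ A"
  shows "\<not> (\<exists>d\<in>univ A. rel A 0 x d) \<longleftrightarrow> rank x = card (univ A) - 1"
proof -
  have "(\<exists>d\<in>univ A. rel A 0 x d) \<longleftrightarrow> (\<exists>d\<in>univ A. rank x < rank d)"
    using x by (simp add: rank_less_iff cong: bex_cong)
  also have "\<dots> \<longleftrightarrow> (\<exists>i<card (univ A). rank x < i)" by (simp only: ex_less_card_iff)
  also have "\<dots> \<longleftrightarrow> rank x \<noteq> card (univ A) - 1" using rank_less_card[OF x] by presburger
  finally show ?thesis by simp
qed

lemma rel_skip_interp:
  assumes "x \<in> univ A" "y \<in> univ A"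
  shows "rel (apply_interp skip_interp A) 0 [x] [y] \<longleftrightarrow> (rank x, rank y) \<in> skip_edges (card (univ A))"
proof -
  have "rank x < card (univ A)" "rank y < card (univ A)" using assms rank_less_card by auto
  then show ?thesis
    using assms two_above_iff minimal_iff maximal_iff rank_eq_iff[OF assms]
    unfolding skip_interp_def rel_unary_interp skip_fm_def two_above_fm_def skip_edges_def by auto
qed

lemma skip_interp_npgraph: "interp_defined 0 skip_interp A \<and> is_npgraph 0 (apply_interp skip_interp A)"
  using finite nonempty rel_skip_interp unfolding interp_defined_def is_npgraph_def
  by (auto simp: skip_interp_def univ_unary_interp skip_edges_def)

lemma connected_nontrivial_skip_interp_iff:
  "connected_nontrivial (apply_interp skip_interp A) \<longleftrightarrow> even (card (univ A))"
proof -
  let ?n = "card (univ A)" and ?H = "apply_interp skip_interp A"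
  have H: "univ ?H = (\<lambda>x. [x]) ` univ A" unfolding skip_interp_def by (rule univ_unary_interp)
  have "([x], [y]) \<in> (edge_set ?H)\<^sup>* \<longleftrightarrow> (rank x, rank y) \<in> (skip_edges ?n)\<^sup>*"
    if "x \<in> univ A" "y \<in> univ A" for x y
  proof
    assume "([x], [y]) \<in> (edge_set ?H)\<^sup>*"
    then have "(rank (hd [x]), rank (hd [y])) \<in> (skip_edges ?n)\<^sup>*"
      by (rule rtrancl_map) (auto simp: edge_set_def H rel_skip_interp)
    then show "(rank x, rank y) \<in> (skip_edges ?n)\<^sup>*" by simp
  next
    assume "(rank x, rank y) \<in> (skip_edges ?n)\<^sup>*"
    then have "([unrank (rank x)], [unrank (rank y)]) \<in> (edge_set ?H)\<^sup>*"
      by (rule rtrancl_map) (auto simp: edge_set_def H skip_edges_def unrank rel_skip_interp)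
    then show "([x], [y]) \<in> (edge_set ?H)\<^sup>*" using that by (simp add: unrank_rank)
  qed
  then have "(\<forall>a\<in>univ ?H. \<forall>b\<in>univ ?H. (a, b) \<in> (edge_set ?H)\<^sup>*) \<longleftrightarrow>
      (\<forall>i<?n. \<forall>j<?n. (i, j) \<in> (skip_edges ?n)\<^sup>*)"
    unfolding H all_less_card_iff by auto
  moreover have "(\<exists>a\<in>univ ?H. \<exists>b\<in>univ ?H. a \<noteq> b) \<longleftrightarrow> 2 \<le> ?n"
    using card_le_Suc0_iff_eq[OF finite] unfolding H by auto
  moreover have "0 < ?n" using finite nonempty by auto
  ultimately show ?thesis
    unfolding connected_nontrivial_def using skip_edges_connected_iff_even[of ?n] by simp
qed

end

lemma finite_linorder_if_linear_order: "A \<in> linear_orders \<Longrightarrow> finite_linorder A"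
  unfolding linear_orders_def finite_linorder_def by blast

definition connected_nontrivial_fm :: fm where
  "connected_nontrivial_fm = Conj (Exi 0 (Exi 1 (Neg (Eq (V 0) (V 1)))))
     (Neg (Exi 0 (Exi 1 (Neg (conn_fm (V 0) (V 1) 2 3)))))"

lemma models_connected_nontrivial_fm:
  assumes G: "is_npgraph 0 G" and tr: "is_traversal G vs"
  shows "models (expand G vs) connected_nontrivial_fm \<longleftrightarrow> connected_nontrivial G"
proof -
  have "models (expand G vs) connected_nontrivial_fm \<longleftrightarrow>
      sat (expand G vs) undefined connected_nontrivial_fm"
    by (rule models_iff_sat) (auto simp: connected_nontrivial_fm_def)
  also have "\<dots> \<longleftrightarrow> connected_nontrivial G"
    unfolding connected_nontrivial_fm_def connected_nontrivial_def
    by (simp add: sat_conn_fm[OF tr npgraph_sym_edge_set[OF G]] cong: bex_cong)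
  finally show ?thesis .
qed

lemma tid_even_linear_orders: "tid (1, 0) linear_orders even_linear_orders"
proof (rule tid.basic, rule basic_tidI)
  show "wf_interp (1, 0) 0 skip_interp"
    unfolding wf_interp_def skip_interp_def unary_interp_def skip_fm_def two_above_fm_def by auto
  show "sentence (2, 0) connected_nontrivial_fm"
    by (auto simp: sentence_def connected_nontrivial_fm_def)
  show "\<And>A. A \<in> linear_orders \<Longrightarrow> interp_defined 0 skip_interp A \<and> is_npgraph 0 (apply_interp skip_interp A)"
    using finite_linorder.skip_interp_npgraph finite_linorder_if_linear_order by blast
  show "A \<in> even_linear_orders \<longleftrightarrow> connected_nontrivial (apply_interp skip_interp A)"
    if "A \<in> linear_orders" for A
    using finite_linorder.connected_nontrivial_skip_interp_iff[OF finite_linorder_if_linear_order]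
      that unfolding even_linear_orders_def by simp
qed (auto simp: even_linear_orders_def models_connected_nontrivial_fm)

theorem lemma3:
  shows "tid (1, 2) pointed2_graphs st_conn \<and>
         tid (1, 0) finite_graphs acyclic_graphs \<and>
         tid (1, 0) finite_graphs bipartite_graphs \<and>
         tid (1, 0) linear_orders even_linear_orders"
  using tid_st_conn tid_acyclic tid_bipartite tid_even_linear_orders by blast

end
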